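(* Let $I\subset\mathbb{R}$ be an open interval and let $\gamma : I \to \mathbb{S}^3_1$ be a smooth null curve in de Sitter 3-space without flex points. Then there exist a frame field $\Gamma : I \to \mathrm{SL}(2,\mathbb{C})$ along $\gamma$ (i.e. $\gamma(t)=\Gamma(t)J\Gamma(t)^{\ast}$ for all $t\in I$), a sign $\varepsilon\in\{1,-1\}$, a nowhere vanishing real 1-form $\omega$ on $I$ and a smooth function $k : I\to\mathbb{R}$ such that \[ \Gamma^{-1}d\Gamma = \begin{pmatrix} 0 & \varepsilon\\ k+i & 0\end{pmatrix}\omega . \] Such a frame field is called a canonical frame along $\gamma$ (with $\omega$ the canonical pseudo-arc element and $k$ the curvature of $\gamma$). Moreover, if $\Gamma$ is a canonical frame field along $\gamma$, then any other canonical frame field along $\gamma$ is $\pm\Gamma$.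
   Context: $\mathrm{Herm}(2)$ is the real 4-dimensional space of $2\times2$ complex Hermitian matrices with the Lorentz metric given by the quadratic form $\langle X,X\rangle=-\det X$. De Sitter 3-space is $\mathbb{S}^3_1=\{X\in\mathrm{Herm}(2): \det X=-1\}$ with the induced Lorentz metric $g$. The group $\mathrm{SL}(2,\mathbb{C})$ acts transitively by isometries via $A\cdot X=AXA^{\ast}$ ($A^\ast$ the conjugate transpose); the stabilizer of $J=\begin{pmatrix}0&-i\\ i&0\end{pmatrix}$ is $\mathrm{SL}(2,\mathbb{R})$, and $\pi(A)=AJA^{\ast}$ is the projection $\mathrm{SL}(2,\mathbb{C})\to\mathbb{S}^3_1$. A frame field along a curve $\gamma:I\to\mathbb{S}^3_1$ is a smooth map $\Gamma:I\to\mathrm{SL}(2,\mathbb{C})$ with $\pi\circ\Gamma=\gamma$. A smooth curve $\gamma$ is null if $g(\gamma'(t),\gamma'(t))=0$ for all $t$, and it has no flex points if $\gamma'(t)$ and $\gamma''(t)$ are linearly independent for all $t$, where $\gamma''$ is the covariant derivative (Levi-Civita connection of $g$) of $\gamma'$ along $\gamma$. *)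

theory Defs
  imports "HOL-Analysis.Analysis"
begin

type_synonym cmat2 = "complex^2^2"

definition mat2 :: "complex \<Rightarrow> complex \<Rightarrow> complex \<Rightarrow> complex \<Rightarrow> cmat2" where
  "mat2 a b c d = (\<chi> i j. if i = 1 then (if j = 1 then a else b) else (if j = 1 then c else d))"

definition adj :: "cmat2 \<Rightarrow> cmat2" where
  "adj X = (\<chi> i j. cnj (X $ j $ i))"

definition hermitian :: "cmat2 \<Rightarrow> bool" where
  "hermitian X \<longleftrightarrow> adj X = X"

text \<open>The Lorentz inner product on Herm(2): polarization of the quadratic form -det X.\<close>
definition lor :: "cmat2 \<Rightarrow> cmat2 \<Rightarrow> real" where
  "lor X Y = - Re (det (X + Y) - det X - det Y) / 2"

definition J_mat :: cmat2 where
  "J_mat = mat2 0 (- \<i>) \<i> 0"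

definition deSitter :: "cmat2 set" where
  "deSitter = {X. hermitian X \<and> det X = -1}"

definition SL2C :: "cmat2 set" where
  "SL2C = {A. det A = 1}"

definition smooth_on :: "real set \<Rightarrow> (real \<Rightarrow> 'a::real_normed_vector) \<Rightarrow> bool" where
  "smooth_on S f \<longleftrightarrow> (\<exists>D. D 0 = f \<and> (\<forall>n. \<forall>t\<in>S. (D n has_vector_derivative D (Suc n) t) (at t)))"

text \<open>Levi-Civita covariant derivative along a curve in de Sitter space (embedded in Herm(2),
  with \<langle>X,X\<rangle> = 1 on it): tangential projection of the ambient second derivative.\<close>
definition cov_acc :: "(real \<Rightarrow> cmat2) \<Rightarrow> real \<Rightarrow> cmat2" where
  "cov_acc \<gamma> t = (let a = vector_derivative (\<lambda>s. vector_derivative \<gamma> (at s)) (at t)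
                   in a - lor a (\<gamma> t) *\<^sub>R \<gamma> t)"

definition open_interval :: "real set \<Rightarrow> bool" where
  "open_interval I \<longleftrightarrow> is_interval I \<and> open I \<and> I \<noteq> {}"

definition null_curve_no_flex :: "real set \<Rightarrow> (real \<Rightarrow> cmat2) \<Rightarrow> bool" where
  "null_curve_no_flex I \<gamma> \<longleftrightarrow>
     smooth_on I \<gamma> \<and> (\<forall>t\<in>I. \<gamma> t \<in> deSitter) \<and>
     (\<forall>t\<in>I. lor (vector_derivative \<gamma> (at t)) (vector_derivative \<gamma> (at t)) = 0) \<and>
     (\<forall>t\<in>I. \<forall>a b::real. a *\<^sub>R vector_derivative \<gamma> (at t) + b *\<^sub>R cov_acc \<gamma> t = 0
                        \<longrightarrow> a = 0 \<and> b = 0)"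

definition frame_field :: "real set \<Rightarrow> (real \<Rightarrow> cmat2) \<Rightarrow> (real \<Rightarrow> cmat2) \<Rightarrow> bool" where
  "frame_field I \<gamma> \<Gamma> \<longleftrightarrow> smooth_on I \<Gamma> \<and> (\<forall>t\<in>I. \<Gamma> t \<in> SL2C) \<and>
     (\<forall>t\<in>I. \<gamma> t = \<Gamma> t ** J_mat ** adj (\<Gamma> t))"

text \<open>Gamma^{-1} dGamma = [[0, eps], [k + i, 0]] omega, with omega = w dt.\<close>
definition canonical_frame_data ::
  "real set \<Rightarrow> (real \<Rightarrow> cmat2) \<Rightarrow> (real \<Rightarrow> cmat2) \<Rightarrow> real \<Rightarrow> (real \<Rightarrow> real) \<Rightarrow> (real \<Rightarrow> real) \<Rightarrow> bool" where
  "canonical_frame_data I \<gamma> \<Gamma> \<epsilon> w k \<longleftrightarrow>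
     frame_field I \<gamma> \<Gamma> \<and> \<epsilon> \<in> {1, -1} \<and>
     smooth_on I w \<and> (\<forall>t\<in>I. w t \<noteq> 0) \<and> smooth_on I k \<and>
     (\<forall>t\<in>I. matrix_inv (\<Gamma> t) ** vector_derivative \<Gamma> (at t)
             = w t *\<^sub>R mat2 0 (complex_of_real \<epsilon>) (complex_of_real (k t) + \<i>) 0)"

definition canonical_frame :: "real set \<Rightarrow> (real \<Rightarrow> cmat2) \<Rightarrow> (real \<Rightarrow> cmat2) \<Rightarrow> bool" where
  "canonical_frame I \<gamma> \<Gamma> \<longleftrightarrow> (\<exists>\<epsilon> w k. canonical_frame_data I \<gamma> \<Gamma> \<epsilon> w k)"

end

theory Submission
  imports Defs
begin

text \<open>Along a null curve \<open>\<gamma>\<close>, the velocity \<open>\<gamma>'\<close> is a rank-one Hermitian matrix, so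
  \<open>\<gamma>' = 2\<omega> u u\<^sup>*\<close> for a spinor \<open>u\<close>, and \<open>u u\<^sup>T\<close> is a rational expression in \<open>\<gamma>\<close>,
  \<open>\<gamma>'\<close> and \<open>\<omega>\<close>. Without flex points \<open>\<gamma>''\<close> is spacelike, and \<open>\<omega>\<close> is normalised by
  \<open>\<omega>\<^sup>4 = -det \<gamma>''/4\<close>. A smooth square root \<open>u\<close> of \<open>u u\<^sup>T\<close> then has Wronskian
  \<open>det (u', u) = \<epsilon> \<omega>\<close> with a constant sign \<open>\<epsilon>\<close>, and \<open>\<Gamma> = (\<epsilon> u'/\<omega>, u)\<close> is a unimodular
  frame along \<open>\<gamma>\<close> whose Maurer-Cartan form has the canonical shape; the imaginary part \<open>\<omega>\<close>
  of its lower-left entry comes from differentiating \<open>\<gamma> = \<Gamma> J \<Gamma>\<^sup>*\<close>.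

  For uniqueness, the transition matrix between two canonical frames is real, since both
  frames map \<open>J\<close> to \<open>\<gamma>\<close>, and comparing the two structure equations forces it to be the
  constant \<open>\<plusminus>1\<close>.\<close>

subsection \<open>Two-by-two complex matrices\<close>

lemma mat2_nth [simp]:
  "mat2 a b c d $ 1 $ 1 = a" "mat2 a b c d $ 1 $ 2 = b"
  "mat2 a b c d $ 2 $ 1 = c" "mat2 a b c d $ 2 $ 2 = d"
  by (simp_all add: mat2_def)

lemma cmat2_eq_iff:
  "(A::cmat2) = B \<longleftrightarrow> A$1$1 = B$1$1 \<and> A$1$2 = B$1$2 \<and> A$2$1 = B$2$1 \<and> A$2$2 = B$2$2"
  by (auto simp: vec_eq_iff forall_2)

lemma mat2_eta: "(A::cmat2) = mat2 (A$1$1) (A$1$2) (A$2$1) (A$2$2)"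
  by (simp add: cmat2_eq_iff)

lemma mat2_eq_iff: "mat2 a b c d = mat2 e f g h \<longleftrightarrow> a = e \<and> b = f \<and> c = g \<and> d = h"
  by (simp add: cmat2_eq_iff)

lemma mat2_mult: "mat2 a b c d ** mat2 e f g h = mat2 (a*e+b*g) (a*f+b*h) (c*e+d*g) (c*f+d*h)"
  by (simp add: cmat2_eq_iff matrix_matrix_mult_def sum_2)

lemma det_mat2: "det (mat2 a b c d) = a*d - b*c"
  by (simp add: det_2)

lemma adj_mat2: "adj (mat2 a b c d) = mat2 (cnj a) (cnj c) (cnj b) (cnj d)"
  by (simp add: cmat2_eq_iff adj_def)

lemma scaleR_mat2: "r *\<^sub>R mat2 a b c d = mat2 (r*\<^sub>Ra) (r*\<^sub>Rb) (r*\<^sub>Rc) (r*\<^sub>Rd)"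
  by (simp add: cmat2_eq_iff)

lemma zero_mat2: "(0::cmat2) = mat2 0 0 0 0"
  by (simp add: cmat2_eq_iff)

lemma mat_1_mat2: "(mat 1::cmat2) = mat2 1 0 0 1"
  by (simp add: cmat2_eq_iff mat_def)

lemma matrix_inv_mat2:
  assumes "a*d - b*c = 1"
  shows "matrix_inv (mat2 a b c d) = mat2 d (-b) (-c) a"
proof -
  have inv: "mat2 a b c d ** mat2 d (-b) (-c) a = mat 1 \<and> mat2 d (-b) (-c) a ** mat2 a b c d = mat 1"
    using assms by (simp add: mat2_mult mat_1_mat2 mat2_eq_iff algebra_simps)
  show ?thesis unfolding matrix_inv_def
  proof (rule some_equality)
    fix A' :: cmat2 assume A': "mat2 a b c d ** A' = mat 1 \<and> A' ** mat2 a b c d = mat 1"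
    have "A' = (mat2 d (-b) (-c) a ** mat2 a b c d) ** A'" using inv by (simp add: matrix_mul_lid)
    also have "\<dots> = mat2 d (-b) (-c) a" using A' by (simp add: matrix_mul_assoc[symmetric] matrix_mul_rid)
    finally show "A' = mat2 d (-b) (-c) a" .
  qed (use inv in auto)
qed

lemma hermitian_iff:
  "hermitian X \<longleftrightarrow> cnj (X$1$1) = X$1$1 \<and> cnj (X$2$2) = X$2$2 \<and> X$2$1 = cnj (X$1$2)"
  unfolding hermitian_def adj_def cmat2_eq_iff by auto

lemma cnj_eq_imp_of_real_Re: "cnj z = z \<Longrightarrow> z = complex_of_real (Re z)"
  by (metis Reals_cnj_iff Reals_cases Re_complex_of_real)

lemma hermitian_eq_mat2:
  assumes "hermitian X"
  shows "X = mat2 (complex_of_real (Re (X$1$1))) (X$1$2) (cnj (X$1$2)) (complex_of_real (Re (X$2$2)))"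
  using assms unfolding hermitian_iff by (subst mat2_eta) (metis cnj_eq_imp_of_real_Re)

lemma cnj_det_hermitian: "hermitian X \<Longrightarrow> cnj (det X) = det X"
  unfolding hermitian_iff by (simp add: det_2 algebra_simps)

definition det_polar :: "cmat2 \<Rightarrow> cmat2 \<Rightarrow> complex" where
  "det_polar A B = A$1$1 * B$2$2 + B$1$1 * A$2$2 - A$1$2 * B$2$1 - B$1$2 * A$2$1"

lemma det_add: "det (A + B) = det A + det B + det_polar A B"
  by (simp add: det_2 det_polar_def algebra_simps)

lemma lor_eq_det_polar: "lor X Y = - Re (det_polar X Y) / 2"
  by (simp add: lor_def det_add)

lemma det_polar_self: "det_polar A A = 2 * det A"
  by (simp add: det_2 det_polar_def)

lemma det_polar_commute: "det_polar A B = det_polar B A"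
  by (simp add: det_polar_def algebra_simps)

subsection \<open>Derivatives of matrix-valued curves\<close>

lemma has_vector_derivative_unique_on:
  assumes "open I" "t \<in> I" "\<And>s. s \<in> I \<Longrightarrow> f s = g s"
    "(f has_vector_derivative f') (at t)" "(g has_vector_derivative g') (at t)"
  shows "f' = g'"
proof -
  have "(g has_vector_derivative f') (at t)"
    using has_vector_derivative_transform_within_open[OF assms(4,1,2)] assms(3) by blast
  then show ?thesis using assms(5) by (rule vector_derivative_unique_at)
qed

lemma has_vector_derivative_const_on:
  assumes "open I" "t \<in> I" "\<And>s. s \<in> I \<Longrightarrow> f s = c" "(f has_vector_derivative f') (at t)"
  shows "f' = 0"
  using has_vector_derivative_unique_on[OF assms(1,2,3,4), of 0] by simp

lemma has_vector_derivative_cnj_fixed: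
  assumes "open I" "t \<in> I" "\<And>s. s \<in> I \<Longrightarrow> cnj (f s) = f s" "(f has_vector_derivative f') (at t)"
  shows "cnj f' = f'"
  by (rule has_vector_derivative_unique_on[OF assms(1-3) has_vector_derivative_cnj[OF assms(4)] assms(4)])

lemma has_vector_derivative_mat2:
  assumes "(a has_vector_derivative a') (at t)" "(b has_vector_derivative b') (at t)"
    "(c has_vector_derivative c') (at t)" "(d has_vector_derivative d') (at t)"
  shows "((\<lambda>t. mat2 (a t) (b t) (c t) (d t)) has_vector_derivative mat2 a' b' c' d') (at t)"
proof -
  have "linear (\<lambda>(a, b, c, d). mat2 a b c d)"
    by (rule linearI) (auto simp: cmat2_eq_iff)
  then have "bounded_linear (\<lambda>(a, b, c, d). mat2 a b c d)"
    by (simp add: linear_conv_bounded_linear)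
  moreover have "((\<lambda>t. (a t, b t, c t, d t)) has_vector_derivative (a', b', c', d')) (at t)"
    using assms by (intro has_vector_derivative_Pair)
  ultimately show ?thesis
    using bounded_linear.has_vector_derivative by fastforce
qed

lemma has_vector_derivative_entry:
  fixes f :: "real \<Rightarrow> 'a::real_normed_vector^'n^'m"
  assumes "(f has_vector_derivative f') (at t)"
  shows "((\<lambda>t. f t $ i $ j) has_vector_derivative f' $ i $ j) (at t)"
proof -
  have "bounded_linear (\<lambda>x::'a^'n^'m. x $ i $ j)"
    using bounded_linear_compose[OF bounded_linear_vec_nth[of j] bounded_linear_vec_nth[of i]] by simp
  from bounded_linear.has_vector_derivative[OF this assms] show ?thesis .
qed

lemma has_vector_derivative_adj:
  assumes "(F has_vector_derivative F') (at t)"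
  shows "((\<lambda>s. adj (F s)) has_vector_derivative adj F') (at t)"
proof -
  have "linear adj"
    by (rule linearI) (auto simp: adj_def vec_eq_iff)
  then have "bounded_linear adj" by (simp add: linear_conv_bounded_linear)
  from bounded_linear.has_vector_derivative[OF this assms] show ?thesis .
qed

lemma has_vector_derivative_det_polar:
  assumes "(F has_vector_derivative F') (at t)" "(G has_vector_derivative G') (at t)"
  shows "((\<lambda>s. det_polar (F s) (G s)) has_vector_derivative det_polar F' (G t) + det_polar (F t) G') (at t)"
proof -
  note f = has_vector_derivative_entry[OF assms(1)] and g = has_vector_derivative_entry[OF assms(2)]
  have "((\<lambda>s. F s$1$1 * G s$2$2 + G s$1$1 * F s$2$2 - F s$1$2 * G s$2$1 - G s$1$2 * F s$2$1)
     has_vector_derivative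
       (F t$1$1 * G'$2$2 + F'$1$1 * G t$2$2) + (G t$1$1 * F'$2$2 + G'$1$1 * F t$2$2)
     - (F t$1$2 * G'$2$1 + F'$1$2 * G t$2$1) - (G t$1$2 * F'$2$1 + G'$1$2 * F t$2$1)) (at t)"
    by (intro has_vector_derivative_diff has_vector_derivative_add has_vector_derivative_mult f g)
  then show ?thesis by (simp add: det_polar_def algebra_simps)
qed

lemma has_vector_derivative_det:
  assumes "(F has_vector_derivative F') (at t)"
  shows "((\<lambda>s. det (F s)) has_vector_derivative det_polar (F t) F') (at t)"
proof -
  have "((\<lambda>s. (1/2) * det_polar (F s) (F s)) has_vector_derivative
        (1/2) * (det_polar F' (F t) + det_polar (F t) F')) (at t)"
    by (intro has_vector_derivative_mult_right has_vector_derivative_det_polar assms)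
  then show ?thesis by (simp add: det_polar_self det_polar_commute)
qed

subsection \<open>Smooth functions via derivative-closed algebras\<close>

text \<open>Smoothness is certified by exhibiting a family of functions that contains the given one
  and is closed under differentiation on \<open>I\<close>; such families are generated as \<open>*\<close>-algebras.\<close>

inductive_set star_alg :: "(real \<Rightarrow> complex) set \<Rightarrow> (real \<Rightarrow> complex) set" for B where
  star_alg_base: "f \<in> B \<Longrightarrow> f \<in> star_alg B"
| star_alg_const: "(\<lambda>_. c) \<in> star_alg B"
| star_alg_add: "f \<in> star_alg B \<Longrightarrow> g \<in> star_alg B \<Longrightarrow> (\<lambda>t. f t + g t) \<in> star_alg B"
| star_alg_mult: "f \<in> star_alg B \<Longrightarrow> g \<in> star_alg B \<Longrightarrow> (\<lambda>t. f t * g t) \<in> star_alg B"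
| star_alg_cnj: "f \<in> star_alg B \<Longrightarrow> (\<lambda>t. cnj (f t)) \<in> star_alg B"

lemma star_alg_minus: "f \<in> star_alg B \<Longrightarrow> (\<lambda>t. - f t) \<in> star_alg B"
  using star_alg_mult[OF star_alg_const[of "-1"]] by simp

lemma star_alg_diff: "f \<in> star_alg B \<Longrightarrow> g \<in> star_alg B \<Longrightarrow> (\<lambda>t. f t - g t) \<in> star_alg B"
  using star_alg_add[OF _ star_alg_minus] by simp

lemma star_alg_power: "f \<in> star_alg B \<Longrightarrow> (\<lambda>t. f t ^ n) \<in> star_alg B"
  by (induction n) (auto intro: star_alg.intros)

lemma star_alg_mono: "f \<in> star_alg B \<Longrightarrow> B \<subseteq> B' \<Longrightarrow> f \<in> star_alg B'"
  by (induction rule: star_alg.induct) (auto intro: star_alg.intros)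

definition deriv_closed_on :: "real set \<Rightarrow> (real \<Rightarrow> 'a::real_normed_vector) set \<Rightarrow> bool" where
  "deriv_closed_on I F \<longleftrightarrow> (\<forall>f\<in>F. \<exists>g\<in>F. \<forall>t\<in>I. (f has_vector_derivative g t) (at t))"

lemma deriv_closed_onD:
  "deriv_closed_on I F \<Longrightarrow> f \<in> F \<Longrightarrow> \<exists>g\<in>F. \<forall>t\<in>I. (f has_vector_derivative g t) (at t)"
  unfolding deriv_closed_on_def by blast

lemma deriv_closed_onE:
  assumes "deriv_closed_on I F"
  obtains \<delta> where "\<And>f. f \<in> F \<Longrightarrow> \<delta> f \<in> F"
    "\<And>f t. f \<in> F \<Longrightarrow> t \<in> I \<Longrightarrow> (f has_vector_derivative \<delta> f t) (at t)"
  using deriv_closed_onD[OF assms] by metis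

lemma deriv_closed_on_continuous:
  "deriv_closed_on I F \<Longrightarrow> f \<in> F \<Longrightarrow> t \<in> I \<Longrightarrow> continuous (at t) f"
  by (meson deriv_closed_onD has_vector_derivative_continuous)

lemma deriv_closed_on_star_alg:
  assumes "\<And>f. f \<in> B \<Longrightarrow> \<exists>g\<in>star_alg B. \<forall>t\<in>I. (f has_vector_derivative g t) (at t)"
  shows "deriv_closed_on I (star_alg B)"
  unfolding deriv_closed_on_def
proof
  fix f assume "f \<in> star_alg B"
  then show "\<exists>g\<in>star_alg B. \<forall>t\<in>I. (f has_vector_derivative g t) (at t)"
  proof induction
    case (star_alg_base f) then show ?case using assms by blast
  next
    case (star_alg_const c) then show ?case
      by (intro bexI[of _ "\<lambda>_. 0"]) (auto intro: star_alg.intros derivative_eq_intros)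
  next
    case (star_alg_add f g)
    then obtain f' g' where "f' \<in> star_alg B" "g' \<in> star_alg B"
      "\<forall>t\<in>I. (f has_vector_derivative f' t) (at t)" "\<forall>t\<in>I. (g has_vector_derivative g' t) (at t)"
      by blast
    then show ?case
      by (intro bexI[of _ "\<lambda>t. f' t + g' t"]) (auto intro: star_alg.intros derivative_eq_intros)
  next
    case (star_alg_mult f g)
    then obtain f' g' where fg: "f' \<in> star_alg B" "g' \<in> star_alg B"
      "\<forall>t\<in>I. (f has_vector_derivative f' t) (at t)" "\<forall>t\<in>I. (g has_vector_derivative g' t) (at t)"
      by blast
    have "(\<lambda>t. f t * g' t + f' t * g t) \<in> star_alg B"
      by (rule star_alg.star_alg_add[OF star_alg.star_alg_mult[OF star_alg_mult.hyps(1) fg(2)]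
            star_alg.star_alg_mult[OF fg(1) star_alg_mult.hyps(2)]])
    then show ?case
      by (intro bexI[of _ "\<lambda>t. f t * g' t + f' t * g t"]) (use fg in \<open>auto intro: has_vector_derivative_mult\<close>)
  next
    case (star_alg_cnj f)
    then obtain f' where "f' \<in> star_alg B" "\<forall>t\<in>I. (f has_vector_derivative f' t) (at t)" by blast
    then show ?case
      by (intro bexI[of _ "\<lambda>t. cnj (f' t)"]) (auto intro: star_alg.intros has_vector_derivative_cnj)
  qed
qed

lemma has_vector_derivative_inverse:
  fixes g :: "real \<Rightarrow> complex"
  assumes "(g has_vector_derivative g') (at t)" "g t \<noteq> 0"
  shows "((\<lambda>s. inverse (g s)) has_vector_derivative - g' * inverse (g t) * inverse (g t)) (at t)"
proof -
  have "((inverse \<circ> g) has_vector_derivative g' * - (inverse (g t) ^ Suc (Suc 0))) (at t)"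
    by (rule field_vector_diff_chain_at[OF assms(1) DERIV_inverse[OF assms(2)]])
  then show ?thesis by (simp add: o_def power2_eq_square mult.assoc)
qed

text \<open>Continuity of \<open>g\<close> rules out the other branch, which stays near \<open>- g t\<close>.\<close>

lemma eventually_continuous_sqrt_eq_csqrt:
  fixes g h :: "real \<Rightarrow> complex"
  assumes cont: "continuous (at t) g" and g0: "g t \<noteq> 0" and h: "continuous (at t) h"
    and S: "open S" "t \<in> S" and sq: "\<And>s. s \<in> S \<Longrightarrow> g s ^ 2 = h s"
  shows "eventually (\<lambda>s. g s = g t * csqrt (h s / h t)) (nhds t)"
proof -
  have ht: "h t = g t ^ 2" using sq S by simp
  then have ht0: "h t \<noteq> 0" using g0 by simp
  have c1: "((\<lambda>s. g s / g t) \<longlongrightarrow> 1) (at t)"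
    using cont g0 tendsto_divide[of g "g t" "at t" "\<lambda>_. g t" "g t"] by (simp add: continuous_at)
  have "isCont (\<lambda>s. csqrt (h s / h t)) t"
    using h ht0 by (intro continuous_at_compose[unfolded o_def, of t _ csqrt] continuous_at_csqrt
        continuous_intros) auto
  then have c2: "((\<lambda>s. csqrt (h s / h t)) \<longlongrightarrow> 1) (at t)"
    using ht0 by (simp add: isCont_def)
  have e1: "eventually (\<lambda>s. dist (g s / g t) 1 < 1/2) (at t)" using c1 by (rule tendstoD) auto
  have e2: "eventually (\<lambda>s. dist (csqrt (h s / h t)) 1 < 1/2) (at t)" using c2 by (rule tendstoD) auto
  have e3: "eventually (\<lambda>s. s \<in> S) (at t)" using S by (intro eventually_at_in_open') auto
  have "eventually (\<lambda>s. g s = g t * csqrt (h s / h t)) (at t)"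
    using e1 e2 e3
  proof eventually_elim
    case (elim s)
    have "(g s / g t)^2 = (csqrt (h s / h t))^2" using sq[OF elim(3)] g0 by (simp add: ht power_divide)
    then have "g s / g t = csqrt (h s / h t) \<or> g s / g t = - csqrt (h s / h t)"
      using power2_eq_iff by blast
    moreover have "g s / g t \<noteq> - csqrt (h s / h t)"
    proof
      assume a: "g s / g t = - csqrt (h s / h t)"
      have "2 = norm ((1 - g s / g t) + (1 - csqrt (h s / h t)))" using a by simp
      also have "\<dots> \<le> norm (1 - g s / g t) + norm (1 - csqrt (h s / h t))" by (rule norm_triangle_ineq)
      also have "\<dots> < 1" using elim(1,2) by (simp add: dist_norm norm_minus_commute)
      finally show False by simp
    qed
    ultimately show ?case using g0 by (simp add: field_simps)
  qed
  then have "eventually (\<lambda>s. s \<noteq> t \<longrightarrow> g s = g t * csqrt (h s / h t)) (nhds t)"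
    by (simp add: eventually_at_filter)
  then show ?thesis
    by (rule eventually_mono) (use ht0 in \<open>metis div_self mult.right_neutral csqrt_1\<close>)
qed

lemma has_vector_derivative_continuous_sqrt:
  fixes g h :: "real \<Rightarrow> complex"
  assumes cont: "continuous (at t) g" and g0: "g t \<noteq> 0"
    and hd: "(h has_vector_derivative h') (at t)"
    and S: "open S" "t \<in> S" and sq: "\<And>s. s \<in> S \<Longrightarrow> g s ^ 2 = h s"
  shows "(g has_vector_derivative h' / (2 * g t)) (at t)"
proof -
  have ht: "h t = g t ^ 2" using sq S by simp
  then have ht0: "h t \<noteq> 0" using g0 by simp
  have r: "((\<lambda>s. h s / h t) has_vector_derivative h' / h t) (at t)"
    using hd by (intro derivative_eq_intros) auto
  have cs: "(csqrt has_field_derivative inverse (2 * csqrt (h t / h t))) (at (h t / h t))"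
    using ht0 by (intro has_field_derivative_csqrt) auto
  have "((csqrt \<circ> (\<lambda>s. h s / h t)) has_vector_derivative (h' / h t) * inverse (2 * csqrt (h t / h t))) (at t)"
    by (rule field_vector_diff_chain_at[OF r cs])
  then have "((\<lambda>s. g t * csqrt (h s / h t)) has_vector_derivative g t * ((h' / h t) * inverse 2)) (at t)"
    using has_vector_derivative_mult_right ht0 by (fastforce simp: o_def)
  moreover have "g t * ((h' / h t) * inverse 2) = h' / (2 * g t)"
    using g0 by (simp add: ht field_simps power2_eq_square)
  moreover have "(g has_vector_derivative h' / (2 * g t)) (at t within UNIV) =
      ((\<lambda>s. g t * csqrt (h s / h t)) has_vector_derivative h' / (2 * g t)) (at t within UNIV)"
  proof (rule has_vector_derivative_cong_ev)
    show "\<forall>\<^sub>F s in nhds t. s \<in> UNIV \<longrightarrow> g s = g t * csqrt (h s / h t)"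
      using eventually_continuous_sqrt_eq_csqrt[OF cont g0 has_vector_derivative_continuous[OF hd] S sq]
      by simp
  qed (use ht0 in simp)
  ultimately show ?thesis by simp
qed

lemma deriv_closed_on_star_alg_adjoin_sqrt:
  assumes I: "open I" and B: "deriv_closed_on I (star_alg B)" and h: "h \<in> star_alg B"
    and g: "\<And>t. t \<in> I \<Longrightarrow> continuous (at t) g" "\<And>t. t \<in> I \<Longrightarrow> g t \<noteq> 0"
      "\<And>t. t \<in> I \<Longrightarrow> g t ^ 2 = h t"
  shows "deriv_closed_on I (star_alg (insert g (insert (\<lambda>t. inverse (g t)) B)))"
    (is "deriv_closed_on I (star_alg ?B')")
proof (rule deriv_closed_on_star_alg)
  have mono: "f \<in> star_alg B \<Longrightarrow> f \<in> star_alg ?B'" for f by (erule star_alg_mono) auto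
  have ig: "(\<lambda>t. inverse (g t)) \<in> star_alg ?B'" by (rule star_alg_base) simp
  obtain h' where h': "h' \<in> star_alg B" "\<And>t. t \<in> I \<Longrightarrow> (h has_vector_derivative h' t) (at t)"
    using deriv_closed_onD[OF B h] by blast
  define g' where "g' t = h' t * inverse (g t) * (1/2)" for t
  have g'_alg: "g' \<in> star_alg ?B'"
    unfolding g'_def[abs_def] by (intro star_alg_mult mono h' ig star_alg_const)
  have dg: "(g has_vector_derivative g' t) (at t)" if t: "t \<in> I" for t
  proof -
    have "h' t / (2 * g t) = g' t" using g(2)[OF t] by (simp add: g'_def field_simps)
    then show ?thesis
      using has_vector_derivative_continuous_sqrt[OF g(1)[OF t] g(2)[OF t] h'(2)[OF t] I t g(3)] by simp
  qed
  have dig: "\<exists>f'\<in>star_alg ?B'. \<forall>t\<in>I. ((\<lambda>t. inverse (g t)) has_vector_derivative f' t) (at t)"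
  proof (intro bexI ballI)
    show "(\<lambda>t. - g' t * inverse (g t) * inverse (g t)) \<in> star_alg ?B'"
      by (intro star_alg_mult star_alg_minus g'_alg ig)
    show "((\<lambda>t. inverse (g t)) has_vector_derivative - g' t * inverse (g t) * inverse (g t)) (at t)"
      if "t \<in> I" for t
      by (rule has_vector_derivative_inverse[OF dg[OF that] g(2)[OF that]])
  qed
  fix f assume f: "f \<in> ?B'"
  show "\<exists>f'\<in>star_alg ?B'. \<forall>t\<in>I. (f has_vector_derivative f' t) (at t)"
  proof (cases "f \<in> B")
    case True
    then obtain f' where "f' \<in> star_alg B" "\<forall>t\<in>I. (f has_vector_derivative f' t) (at t)"
      using deriv_closed_onD[OF B star_alg_base] by blast
    then show ?thesis using mono by blast
  next
    case False
    then have "f = g \<or> f = (\<lambda>t. inverse (g t))" using f by simp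
    then show ?thesis using g'_alg dg dig by blast
  qed
qed

lemma smooth_on_mat2:
  assumes "deriv_closed_on I F" "a \<in> F" "b \<in> F" "c \<in> F" "d \<in> F"
  shows "smooth_on I (\<lambda>t. mat2 (a t) (b t) (c t) (d t))"
proof -
  obtain \<delta> where \<delta>: "\<And>f. f \<in> F \<Longrightarrow> \<delta> f \<in> F"
    "\<And>f t. f \<in> F \<Longrightarrow> t \<in> I \<Longrightarrow> (f has_vector_derivative \<delta> f t) (at t)"
    using deriv_closed_onE[OF assms(1)] by blast
  have F: "f \<in> F \<Longrightarrow> (\<delta> ^^ n) f \<in> F" for n f by (induction n) (use \<delta> in auto)
  show ?thesis unfolding smooth_on_def
    by (intro exI[of _ "\<lambda>n t. mat2 ((\<delta> ^^ n) a t) ((\<delta> ^^ n) b t) ((\<delta> ^^ n) c t) ((\<delta> ^^ n) d t)"])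
      (use F \<delta> assms in \<open>auto intro!: has_vector_derivative_mat2\<close>)
qed

lemma smooth_on_Re_deriv_closed:
  assumes "deriv_closed_on I F" "f \<in> F"
  shows "smooth_on I (\<lambda>t. Re (f t))"
proof -
  obtain \<delta> where \<delta>: "\<And>f. f \<in> F \<Longrightarrow> \<delta> f \<in> F"
    "\<And>f t. f \<in> F \<Longrightarrow> t \<in> I \<Longrightarrow> (f has_vector_derivative \<delta> f t) (at t)"
    using deriv_closed_onE[OF assms(1)] by blast
  have F: "(\<delta> ^^ n) f \<in> F" for n by (induction n) (use \<delta> assms in auto)
  show ?thesis unfolding smooth_on_def
    by (intro exI[of _ "\<lambda>n t. Re ((\<delta> ^^ n) f t)"])
      (use F \<delta> in \<open>auto intro!: bounded_linear.has_vector_derivative[OF bounded_linear_Re]\<close>)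
qed

subsection \<open>Linear algebra of spinors\<close>

lemma hermitian_rank_one_factor:
  fixes u1 u2 v1 v2 :: complex
  assumes h: "cnj (u1 * v1) = u1 * v1" "cnj (u2 * v2) = u2 * v2" "u2 * v1 = cnj (u1 * v2)"
    and pos: "Re (u1 * v1 + u2 * v2) > 0"
  shows "\<exists>m>0. v1 = complex_of_real m * cnj u1 \<and> v2 = complex_of_real m * cnj u2"
proof -
  define l where "l = Re (u1 * v1 + u2 * v2)"
  have L: "u1 * v1 + u2 * v2 = complex_of_real l"
    unfolding l_def using h(1,2) by (intro cnj_eq_imp_of_real_Re) simp
  define n where "n = ((Re u1)^2 + (Im u1)^2) + ((Re u2)^2 + (Im u2)^2)"
  have nn: "u1 * cnj u1 + u2 * cnj u2 = complex_of_real n"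
    unfolding n_def by (simp add: complex_mult_cnj)
  have "u1 \<noteq> 0 \<or> u2 \<noteq> 0" using pos by auto
  then have npos: "n > 0" unfolding n_def
    by (auto simp: add_pos_nonneg add_nonneg_pos complex_eq_iff sum_power2_gt_zero_iff)
  have c: "cnj u1 * cnj v1 = u1 * v1" "cnj u2 * cnj v2 = u2 * v2" "u2 * v1 = cnj u1 * cnj v2"
    "cnj u2 * cnj v1 = u1 * v2"
    using h by (simp_all, metis complex_cnj_cnj complex_cnj_mult)
  have "v1 * (u1 * cnj u1 + u2 * cnj u2) = cnj u1 * (u1 * v1 + u2 * v2)"
    using c by algebra
  then have v1: "v1 = complex_of_real (l / n) * cnj u1"
    using npos unfolding nn L by (simp add: field_simps)
  have "v2 * (u1 * cnj u1 + u2 * cnj u2) = cnj u2 * (u1 * v1 + u2 * v2)"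
    using c by algebra
  then have v2: "v2 = complex_of_real (l / n) * cnj u2"
    using npos unfolding nn L by (simp add: field_simps)
  have "l > 0" using pos by (simp add: l_def)
  then show ?thesis using v1 v2 npos by (intro exI[of _ "l / n"]) simp
qed

text \<open>The reality condition satisfied by each column of any \<open>\<Gamma>\<close> with \<open>det \<Gamma> = 1\<close> and
  \<open>\<Gamma> J \<Gamma>\<^sup>* = X\<close>.\<close>

definition frame_column :: "cmat2 \<Rightarrow> complex \<Rightarrow> complex \<Rightarrow> bool" where
  "frame_column X y1 y2 \<longleftrightarrow>
     cnj y1 = -\<i> * (X$2$1 * y1 - X$1$1 * y2) \<and> cnj y2 = -\<i> * (X$2$2 * y1 - X$1$2 * y2)"

lemma frame_column_scale:
  assumes "frame_column X y1 y2"
  shows "frame_column X (complex_of_real s * y1) (complex_of_real s * y2)"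
proof -
  have h: "cnj y1 = -\<i> * (X$2$1 * y1 - X$1$1 * y2)" "cnj y2 = -\<i> * (X$2$2 * y1 - X$1$2 * y2)"
    using assms unfolding frame_column_def by auto
  show ?thesis unfolding frame_column_def by (simp add: h algebra_simps)
qed

lemma frame_column_det_real:
  assumes "det X = -1" "frame_column X a1 a2" "frame_column X b1 b2"
  shows "cnj (a1 * b2 - a2 * b1) = a1 * b2 - a2 * b1"
proof -
  have ii: "\<i> * \<i> = (-1::complex)" by simp
  have dX: "X$1$1 * X$2$2 - X$1$2 * X$2$1 = -1" using assms(1) by (simp add: det_2)
  have "cnj (a1 * b2 - a2 * b1) = cnj a1 * cnj b2 - cnj a2 * cnj b1" by simp
  also have "\<dots> = a1 * b2 - a2 * b1"
    using assms(2,3) unfolding frame_column_def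
    by (elim conjE, simp only:, use dX ii in algebra)
  finally show ?thesis .
qed

lemma frame_columns:
  assumes d: "a * d - b * c = 1" and X: "X = mat2 a b c d ** J_mat ** adj (mat2 a b c d)"
  shows "hermitian X" "det X = -1" "frame_column X a c" "frame_column X b d"
proof -
  have ii: "\<i> * \<i> = (-1::complex)" by simp
  have cd: "cnj a * cnj d - cnj b * cnj c = 1" using arg_cong[OF d, of cnj] by simp
  have Xe: "X = mat2 (\<i>*(b*cnj a) - \<i>*(a*cnj b)) (\<i>*(b*cnj c) - \<i>*(a*cnj d))
                     (\<i>*(d*cnj a) - \<i>*(c*cnj b)) (\<i>*(d*cnj c) - \<i>*(c*cnj d))"
    unfolding X J_mat_def adj_mat2 mat2_mult by (simp add: mat2_eq_iff algebra_simps)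
  show "hermitian X" unfolding hermitian_iff Xe by (simp add: algebra_simps)
  show "det X = -1" unfolding Xe det_mat2 using d cd ii by algebra
  show "frame_column X a c" unfolding frame_column_def Xe mat2_nth using d cd ii by (intro conjI; algebra)
  show "frame_column X b d" unfolding frame_column_def Xe mat2_nth using d cd ii by (intro conjI; algebra)
qed

lemma frame_columns_project:
  assumes hX: "hermitian X" and dX: "det X = -1"
    and "frame_column X e11 e12" "frame_column X e21 e22" and d: "e11 * e22 - e21 * e12 = 1"
  shows "mat2 e11 e21 e12 e22 ** J_mat ** adj (mat2 e11 e21 e12 e22) = X"
proof -
  have ii: "\<i> * \<i> = (-1::complex)" by simp
  have dX': "X$1$1 * X$2$2 - X$1$2 * X$2$1 = -1" using dX by (simp add: det_2)
  have h: "cnj (X$1$1) = X$1$1" "cnj (X$2$2) = X$2$2" "X$1$2 = cnj (X$2$1)"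
    using hX unfolding hermitian_iff by auto
  show ?thesis
    unfolding J_mat_def adj_mat2 mat2_mult cmat2_eq_iff mat2_nth
    using assms(3,4) unfolding frame_column_def
    by (elim conjE, simp only:, use dX' d ii h in \<open>intro conjI; algebra\<close>)
qed

text \<open>Composed with complex conjugation, the linear map \<open>u \<mapsto> (\<alpha>, \<beta>)\<close> on the left-hand
  sides is an involution because \<open>X\<close> is Hermitian with \<open>det X = -1\<close>; hence \<open>m\<^sup>2 = 1\<close>.\<close>

lemma frame_column_scale_eq_1:
  assumes hX: "hermitian X" and dX: "det X = -1" and u: "u1 \<noteq> 0 \<or> u2 \<noteq> 0" and m: "m > 0"
    and \<alpha>: "-\<i>*(X$2$1*u1 - X$1$1*u2) = complex_of_real m * cnj u1"
    and \<beta>: "-\<i>*(X$2$2*u1 - X$1$2*u2) = complex_of_real m * cnj u2"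
  shows "m = 1"
proof -
  have ii: "\<i>*\<i> = (-1::complex)" by simp
  have d: "X$1$1 * X$2$2 - X$1$2 * X$2$1 = -1" using dX by (simp add: det_2)
  have hX': "cnj (X$1$1) = X$1$1" "cnj (X$2$2) = X$2$2" "X$2$1 = cnj (X$1$2)"
    using hX unfolding hermitian_iff by auto
  have "complex_of_real m * u1 = \<i>*(X$1$2 * cnj u1 - X$1$1 * cnj u2)"
    "complex_of_real m * u2 = \<i>*(X$2$2 * cnj u1 - X$2$1 * cnj u2)"
    using arg_cong[OF \<alpha>, of cnj] arg_cong[OF \<beta>, of cnj] hX' by simp_all
  then have "cnj u1 = -\<i>*(complex_of_real m * u1 * X$2$1 - complex_of_real m * u2 * X$1$1)"
    "cnj u2 = -\<i>*(complex_of_real m * u1 * X$2$2 - complex_of_real m * u2 * X$1$2)"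
    using d ii by algebra+
  then have "cnj u1 = complex_of_real m * (complex_of_real m * cnj u1)"
    "cnj u2 = complex_of_real m * (complex_of_real m * cnj u2)"
    unfolding \<alpha>[symmetric] \<beta>[symmetric] by (simp_all add: algebra_simps)
  then have "complex_of_real (m * m) = 1" using u by (metis complex_cnj_zero_iff mult.assoc
        mult_cancel_right2 of_real_mult)
  then have "m * m = 1" by (simp only: of_real_eq_1_iff)
  then have "(m - 1) * (m + 1) = 0" by (simp add: algebra_simps)
  then show "m = 1" using m by simp
qed

text \<open>The hypotheses say \<open>2w u u\<^sup>T = i A C\<close> for a cofactor-type matrix \<open>C\<close> of \<open>X\<close>, so
  \<open>A = 2w u v\<^sup>T\<close> with \<open>v = (\<alpha>, \<beta>)\<close> linear in \<open>u\<close>; Hermitian symmetry of \<open>A\<close> and \<open>w tr A > 0\<close> give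
  \<open>v = m u\<^sup>*\<close> with \<open>m > 0\<close>.\<close>

lemma spinor_factor_of_null_hermitian:
  fixes u1 u2 :: complex and w :: real
  assumes hX: "hermitian X" and dX: "det X = -1" and hA: "hermitian A"
    and P11: "2*w*u1^2 = \<i>*(A$1$1 * X$1$2 - A$1$2 * X$1$1)"
    and P12: "2*w*(u1*u2) = \<i>*(A$1$1 * X$2$2 - A$1$2 * X$2$1)"
    and P21: "2*w*(u1*u2) = \<i>*(A$2$1 * X$1$2 - A$2$2 * X$1$1)"
    and P22: "2*w*u2^2 = \<i>*(A$2$1 * X$2$2 - A$2$2 * X$2$1)"
    and tr: "w * Re (A$1$1 + A$2$2) > 0"
  shows "frame_column X u1 u2 \<and>
    A$1$1 = 2*w*u1*cnj u1 \<and> A$1$2 = 2*w*u1*cnj u2 \<and> A$2$1 = 2*w*u2*cnj u1 \<and> A$2$2 = 2*w*u2*cnj u2"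
proof -
  define \<alpha> where "\<alpha> = -\<i>*(X$2$1*u1 - X$1$1*u2)"
  define \<beta> where "\<beta> = -\<i>*(X$2$2*u1 - X$1$2*u2)"
  have ii: "\<i>*\<i> = (-1::complex)" by simp
  have d: "X$1$1 * X$2$2 - X$1$2 * X$2$1 = -1" using dX by (simp add: det_2)
  have hA': "cnj (A$1$1) = A$1$1" "cnj (A$2$2) = A$2$2" "A$2$1 = cnj (A$1$2)"
    using hA unfolding hermitian_iff by auto
  have A11: "A$1$1 = 2*w*u1*\<alpha>" unfolding \<alpha>_def using P11 P12 d ii by algebra
  have A21: "A$2$1 = 2*w*u2*\<alpha>" unfolding \<alpha>_def using P21 P22 d ii by algebra
  have A12: "A$1$2 = 2*w*u1*\<beta>" unfolding \<beta>_def using P11 P12 d ii by algebra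
  have A22: "A$2$2 = 2*w*u2*\<beta>" unfolding \<beta>_def using P21 P22 d ii by algebra
  have w0: "w \<noteq> 0" using tr by auto
  have "complex_of_real w * (2 * cnj (u1 * \<alpha>)) = complex_of_real w * (2 * (u1 * \<alpha>))"
    using hA'(1) A11 by (simp add: algebra_simps)
  then have r1: "cnj (u1 * \<alpha>) = u1 * \<alpha>" using w0 by simp
  have "complex_of_real w * (2 * cnj (u2 * \<beta>)) = complex_of_real w * (2 * (u2 * \<beta>))"
    using hA'(2) A22 by (simp add: algebra_simps)
  then have r2: "cnj (u2 * \<beta>) = u2 * \<beta>" using w0 by simp
  have "complex_of_real w * (2 * (u2 * \<alpha>)) = complex_of_real w * (2 * cnj (u1 * \<beta>))"
    using A21 A12 hA'(3) by (simp add: algebra_simps) metis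
  then have r3: "u2 * \<alpha> = cnj (u1 * \<beta>)" using w0 by simp
  define S where "S = u1 * \<alpha> + u2 * \<beta>"
  have "A$1$1 + A$2$2 = (2 * w) *\<^sub>R S" using A11 A22 by (simp add: S_def scaleR_conv_of_real algebra_simps)
  then have "w * Re (A$1$1 + A$2$2) = (w * w) * (2 * Re S)" by simp
  then have "(w * w) * (2 * Re S) > 0" using tr by linarith
  moreover have "w * w > 0" using w0 by (metis not_real_square_gt_zero)
  ultimately have "Re (u1 * \<alpha> + u2 * \<beta>) > 0" by (simp add: S_def zero_less_mult_iff)
  then obtain m where m: "m > 0" "\<alpha> = complex_of_real m * cnj u1" "\<beta> = complex_of_real m * cnj u2"
    using hermitian_rank_one_factor[OF r1 r2 r3] by blast
  have "u1 \<noteq> 0 \<or> u2 \<noteq> 0" using tr A11 A22 by auto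
  then have "m = 1" using frame_column_scale_eq_1[OF hX dX _ m(1)] m(2,3) unfolding \<alpha>_def \<beta>_def by blast
  then show ?thesis
    using A11 A12 A21 A22 m(2,3) unfolding frame_column_def \<alpha>_def[symmetric] \<beta>_def[symmetric] by auto
qed

text \<open>In Lorentzian signature, a vector orthogonal to a nonzero null vector \<open>A\<close> is either
  spacelike or a multiple of \<open>A\<close>. In coordinates \<open>A = [[p, q], [cnj q, r]]\<close>, \<open>B = [[a, b], [cnj b, c]]\<close>:\<close>

lemma orthogonal_null_coords:
  fixes p r a c :: real and q b :: complex
  assumes d: "p*r = (Re q)^2 + (Im q)^2" and nz: "p \<noteq> 0 \<or> r \<noteq> 0"
    and orth: "p*c + a*r - 2*(Re b * Re q + Im b * Im q) = 0"
    and ge: "a*c - ((Re b)^2 + (Im b)^2) \<ge> 0"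
  shows "\<exists>l. a = l*p \<and> b = complex_of_real l * q \<and> c = l*r"
proof (cases "p = 0")
  case False
  have "p^2*(a*c - ((Re b)^2 + (Im b)^2)) = - ((p*Re b - a*Re q)^2 + (p*Im b - a*Im q)^2)"
    using d orth by algebra
  moreover have "p^2*(a*c - ((Re b)^2 + (Im b)^2)) \<ge> 0" using ge by simp
  ultimately have "(p*Re b - a*Re q)^2 + (p*Im b - a*Im q)^2 \<le> 0" by linarith
  then have "p*Re b = a*Re q" "p*Im b = a*Im q"
    by (simp_all only: sum_power2_le_zero_iff right_minus_eq)
  define l where "l = a/p"
  have b: "Re b = l * Re q" "Im b = l * Im q"
    using \<open>p*Re b = a*Re q\<close> \<open>p*Im b = a*Im q\<close> False by (simp_all add: l_def field_simps)
  have "p*c = 2*(Re b * Re q + Im b * Im q) - a*r" using orth by linarith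
  also have "\<dots> = 2*l*(p*r) - a*r" unfolding d b by (simp add: algebra_simps power2_eq_square)
  also have "\<dots> = a*r" using False by (simp add: l_def field_simps)
  finally have "c = l*r" using False by (simp add: l_def field_simps)
  moreover have "a = l*p" using False by (simp add: l_def)
  ultimately show ?thesis using b by (intro exI[of _ l]) (simp add: complex_eq_iff)
next
  case True
  then have r0: "r \<noteq> 0" using nz by simp
  have "(Re q)^2 + (Im q)^2 = 0" using d True by simp
  then have q0: "q = 0" by (simp add: complex_eq_iff sum_power2_eq_zero_iff)
  have "a = 0" using orth True q0 r0 by simp
  then have "(Re b)^2 + (Im b)^2 \<le> 0" using ge by simp
  then have "b = 0" by (simp add: complex_eq_iff sum_power2_le_zero_iff)
  show ?thesis using \<open>a = 0\<close> \<open>b = 0\<close> q0 True r0 by (intro exI[of _ "c/r"]) simp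
qed

lemma Re_det_neg_if_orthogonal_null:
  assumes hA: "hermitian A" and hB: "hermitian B" and dA: "det A = 0" and A0: "A \<noteq> 0"
    and orth: "det_polar A B = 0" and nl: "\<And>l::real. B \<noteq> l *\<^sub>R A"
  shows "Re (det B) < 0"
proof (rule ccontr)
  assume "\<not> Re (det B) < 0"
  then have ge: "Re (det B) \<ge> 0" by simp
  define p r q where "p = Re (A$1$1)" "r = Re (A$2$2)" "q = A$1$2"
  define a c b where "a = Re (B$1$1)" "c = Re (B$2$2)" "b = B$1$2"
  have A: "A = mat2 (complex_of_real p) q (cnj q) (complex_of_real r)"
    unfolding p_r_q_def by (rule hermitian_eq_mat2[OF hA])
  have B: "B = mat2 (complex_of_real a) b (cnj b) (complex_of_real c)"
    unfolding a_c_b_def by (rule hermitian_eq_mat2[OF hB])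
  have d: "p*r = (Re q)^2 + (Im q)^2"
    using arg_cong[OF dA, of Re] unfolding A by (simp add: det_mat2 power2_eq_square)
  have nz: "p \<noteq> 0 \<or> r \<noteq> 0"
  proof (rule ccontr)
    assume pr: "\<not> (p \<noteq> 0 \<or> r \<noteq> 0)"
    then have "(Re q)^2 + (Im q)^2 = 0" using d by simp
    then have "q = 0" by (simp add: complex_eq_iff sum_power2_eq_zero_iff)
    then show False using A0 pr unfolding A by (simp add: zero_mat2 mat2_eq_iff)
  qed
  have orth': "p*c + a*r - 2*(Re b * Re q + Im b * Im q) = 0"
    using arg_cong[OF orth, of Re] unfolding A B by (simp add: det_polar_def)
  have ge': "a*c - ((Re b)^2 + (Im b)^2) \<ge> 0"
    using ge unfolding B by (simp add: det_mat2 power2_eq_square)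
  obtain l where "a = l*p" "b = complex_of_real l * q" "c = l*r"
    using orthogonal_null_coords[OF d nz orth' ge'] by blast
  then have "B = l *\<^sub>R A" unfolding A B by (simp only: scaleR_mat2) (simp add: scaleR_conv_of_real)
  then show False using nl by blast
qed

text \<open>The determinant of \<open>a u \<bar>u\<^sup>T + b (f \<bar>u\<^sup>T + u \<bar>f\<^sup>T)\<close>, with \<open>cu, cf\<close> standing for
  \<open>\<bar>u, \<bar>f\<close>.\<close>

lemma det_sum_rank_one:
  fixes a b u1 u2 cu1 cu2 f1 f2 cf1 cf2 :: complex
  shows "(a*u1*cu1 + b*(f1*cu1 + u1*cf1))*(a*u2*cu2 + b*(f2*cu2 + u2*cf2)) -
         (a*u1*cu2 + b*(f1*cu2 + u1*cf2))*(a*u2*cu1 + b*(f2*cu1 + u2*cf1))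
       = - (b^2) * (f1*u2 - f2*u1) * (cf1*cu2 - cf2*cu1)"
  by algebra

lemma symmetric_rank_one_sqrt:
  fixes p11 p12 p22 \<mu> s :: complex
  assumes rk: "p11 * p22 = p12 * p12" and s: "s^2 = p11 + 2*\<mu>*p12 + \<mu>^2*p22" "s \<noteq> 0"
  shows "((p11 + \<mu>*p12) / s)^2 = p11" "(p11 + \<mu>*p12) / s * ((p12 + \<mu>*p22) / s) = p12"
    "((p12 + \<mu>*p22) / s)^2 = p22"
proof -
  have "(p11 + \<mu>*p12)^2 = p11 * s^2" "(p11 + \<mu>*p12) * (p12 + \<mu>*p22) = p12 * s^2"
    "(p12 + \<mu>*p22)^2 = p22 * s^2"
    unfolding s(1) using rk by (simp_all add: algebra_simps power2_eq_square)
  then show "((p11 + \<mu>*p12) / s)^2 = p11" "(p11 + \<mu>*p12) / s * ((p12 + \<mu>*p22) / s) = p12"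
    "((p12 + \<mu>*p22) / s)^2 = p22"
    using s(2) by (simp_all add: power_divide field_simps power2_eq_square)
qed

subsection \<open>Null curves without flex points\<close>

locale null_curve =
  fixes I :: "real set" and D :: "nat \<Rightarrow> real \<Rightarrow> cmat2"
  assumes interval: "open_interval I"
    and deriv: "\<And>n t. t \<in> I \<Longrightarrow> (D n has_vector_derivative D (Suc n) t) (at t)"
    and hermitian_D0: "\<And>t. t \<in> I \<Longrightarrow> hermitian (D 0 t)"
    and det_D0: "\<And>t. t \<in> I \<Longrightarrow> det (D 0 t) = -1"
    and null: "\<And>t. t \<in> I \<Longrightarrow> lor (D 1 t) (D 1 t) = 0"
    and no_flex: "\<And>t a b. t \<in> I \<Longrightarrow>
      a *\<^sub>R D 1 t + b *\<^sub>R (D 2 t - lor (D 2 t) (D 0 t) *\<^sub>R D 0 t) = 0 \<Longrightarrow> a = 0 \<and> b = 0"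
begin

lemma open_I: "open I" and convex_I: "convex I" and nonempty_I: "I \<noteq> {}"
  using interval unfolding open_interval_def by (auto simp: is_interval_convex)

lemma deriv_0: "t \<in> I \<Longrightarrow> (D 0 has_vector_derivative D 1 t) (at t)"
  using deriv[of t 0] by simp

lemma deriv_1: "t \<in> I \<Longrightarrow> (D 1 has_vector_derivative D 2 t) (at t)"
  using deriv[of t 1] by (simp add: numeral_2_eq_2)

lemma deriv_entry: "t \<in> I \<Longrightarrow> ((\<lambda>s. D n s $ i $ j) has_vector_derivative D (Suc n) t $ i $ j) (at t)"
  by (rule has_vector_derivative_entry[OF deriv])

lemma deriv_entry_0: "t \<in> I \<Longrightarrow> ((\<lambda>s. D 0 s $ i $ j) has_vector_derivative D 1 t $ i $ j) (at t)"
  using deriv_entry[of t 0] by simp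

lemma deriv_entry_1: "t \<in> I \<Longrightarrow> ((\<lambda>s. D 1 s $ i $ j) has_vector_derivative D 2 t $ i $ j) (at t)"
  using deriv_entry[of t 1] by (simp add: numeral_2_eq_2)

lemma hermitian_D: "t \<in> I \<Longrightarrow> hermitian (D n t)"
proof (induction n arbitrary: t)
  case 0 then show ?case by (rule hermitian_D0)
next
  case (Suc n)
  have "adj (D (Suc n) t) = D (Suc n) t"
  proof (rule has_vector_derivative_unique_on[OF open_I Suc.prems])
    show "adj (D n s) = D n s" if "s \<in> I" for s using Suc.IH[OF that] by (simp add: hermitian_def)
  qed (use has_vector_derivative_adj deriv Suc.prems in auto)
  then show ?case by (simp add: hermitian_def)
qed

lemma det_D1: "t \<in> I \<Longrightarrow> det (D 1 t) = 0"
proof -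
  assume t: "t \<in> I"
  have "Re (det (D 1 t)) = 0" using null[OF t] by (simp add: lor_eq_det_polar det_polar_self)
  with cnj_det_hermitian[OF hermitian_D[OF t]] show ?thesis
    by (metis Re_complex_of_real cnj_eq_imp_of_real_Re of_real_0)
qed

lemma det_polar_D0_D1: "t \<in> I \<Longrightarrow> det_polar (D 0 t) (D 1 t) = 0"
  by (rule has_vector_derivative_const_on[OF open_I _ det_D0 has_vector_derivative_det[OF deriv_0]])

lemma det_polar_D1_D2: "t \<in> I \<Longrightarrow> det_polar (D 1 t) (D 2 t) = 0"
  by (rule has_vector_derivative_const_on[OF open_I _ det_D1 has_vector_derivative_det[OF deriv_1]])

lemma det_polar_D0_D2: "t \<in> I \<Longrightarrow> det_polar (D 0 t) (D 2 t) = 0"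
proof -
  assume t: "t \<in> I"
  have "det_polar (D 1 t) (D 1 t) + det_polar (D 0 t) (D 2 t) = 0"
    by (rule has_vector_derivative_const_on[OF open_I t det_polar_D0_D1
          has_vector_derivative_det_polar[OF deriv_0[OF t] deriv_1[OF t]]])
  then show ?thesis using det_D1[OF t] by (simp add: det_polar_self)
qed

lemma D1_D2_independent: "t \<in> I \<Longrightarrow> a *\<^sub>R D 1 t + b *\<^sub>R D 2 t = 0 \<Longrightarrow> a = 0 \<and> b = 0"
  using no_flex[of t a b] det_polar_D0_D2[of t] by (simp add: lor_eq_det_polar det_polar_commute)

lemma D1_nonzero: "t \<in> I \<Longrightarrow> D 1 t \<noteq> 0"
  using D1_D2_independent[of t 1 0] by auto

lemma Re_det_D2_neg: "t \<in> I \<Longrightarrow> Re (det (D 2 t)) < 0"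
proof -
  assume t: "t \<in> I"
  show ?thesis
  proof (rule Re_det_neg_if_orthogonal_null[OF hermitian_D[OF t] hermitian_D[OF t] det_D1[OF t]
        D1_nonzero[OF t] det_polar_D1_D2[OF t]])
    fix l :: real show "D 2 t \<noteq> l *\<^sub>R D 1 t"
    proof
      assume "D 2 t = l *\<^sub>R D 1 t"
      then have "(-l) *\<^sub>R D 1 t + 1 *\<^sub>R D 2 t = 0" by simp
      from D1_D2_independent[OF t this] show False by simp
    qed
  qed
qed

text \<open>A nonzero null vector is not orthogonal to the timelike identity matrix.\<close>

lemma Re_trace_D1_nonzero: "t \<in> I \<Longrightarrow> Re (D 1 t $1$1 + D 1 t $2$2) \<noteq> 0"
proof
  assume t: "t \<in> I" and z: "Re (D 1 t $1$1 + D 1 t $2$2) = 0"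
  define p r q where "p = Re (D 1 t $1$1)" "r = Re (D 1 t $2$2)" "q = D 1 t $1$2"
  have A: "D 1 t = mat2 (complex_of_real p) q (cnj q) (complex_of_real r)"
    unfolding p_r_q_def by (rule hermitian_eq_mat2[OF hermitian_D[OF t]])
  have d: "p*r = (Re q)^2 + (Im q)^2"
    using arg_cong[OF det_D1[OF t], of Re] unfolding A by (simp add: det_mat2 power2_eq_square)
  have "r = -p" using z unfolding A by simp
  then have "(Re q)^2 + (Im q)^2 + p^2 = 0" using d by (simp add: power2_eq_square)
  then have "p = 0" "q = 0" by (simp_all add: complex_eq_iff add_nonneg_eq_0_iff)
  then have "D 1 t = 0" using A \<open>r = -p\<close> by (simp add: zero_mat2)
  then show False using D1_nonzero[OF t] by simp
qed

end

lemma null_curve_no_flexE: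
  assumes I: "open_interval I" and \<gamma>: "null_curve_no_flex I \<gamma>"
  obtains D where "D 0 = \<gamma>" "null_curve I D"
proof -
  have opI: "open I" using I by (simp add: open_interval_def)
  obtain D where D0: "D 0 = \<gamma>" and Dd: "\<And>n t. t \<in> I \<Longrightarrow> (D n has_vector_derivative D (Suc n) t) (at t)"
    using \<gamma> unfolding null_curve_no_flex_def smooth_on_def by blast
  have dS: "\<And>t. t \<in> I \<Longrightarrow> \<gamma> t \<in> deSitter"
    and nl: "\<And>t. t \<in> I \<Longrightarrow> lor (vector_derivative \<gamma> (at t)) (vector_derivative \<gamma> (at t)) = 0"
    and nf: "\<And>t a b. t \<in> I \<Longrightarrow> a *\<^sub>R vector_derivative \<gamma> (at t) + b *\<^sub>R cov_acc \<gamma> t = 0 \<Longrightarrow> a = 0 \<and> b = 0"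
    using \<gamma> unfolding null_curve_no_flex_def by blast+
  have vd1: "vector_derivative \<gamma> (at t) = D 1 t" if "t \<in> I" for t
    using vector_derivative_at[OF Dd[OF that, of 0]] D0 by simp
  have cov: "cov_acc \<gamma> t = D 2 t - lor (D 2 t) (D 0 t) *\<^sub>R D 0 t" if t: "t \<in> I" for t
  proof -
    have "((\<lambda>s. vector_derivative \<gamma> (at s)) has_vector_derivative D 2 t) (at t)"
    proof (rule has_vector_derivative_transform_within_open[OF _ opI t])
      show "(D 1 has_vector_derivative D 2 t) (at t)" using Dd[OF t, of 1] by (simp add: numeral_2_eq_2)
    qed (use vd1 in simp)
    then have "vector_derivative (\<lambda>s. vector_derivative \<gamma> (at s)) (at t) = D 2 t"
      by (rule vector_derivative_at)
    then show ?thesis unfolding cov_acc_def D0 by (simp add: Let_def)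
  qed
  have "null_curve I D"
  proof
    show "hermitian (D 0 t)" "det (D 0 t) = -1" if "t \<in> I" for t
      using dS[OF that] D0 by (simp_all add: deSitter_def)
    show "lor (D 1 t) (D 1 t) = 0" if "t \<in> I" for t using nl[OF that] vd1[OF that] by simp
    show "a = 0 \<and> b = 0"
      if "t \<in> I" "a *\<^sub>R D 1 t + b *\<^sub>R (D 2 t - lor (D 2 t) (D 0 t) *\<^sub>R D 0 t) = 0" for t a b
      using nf[OF that(1), of a b] that(2) vd1[OF that(1)] cov[OF that(1)] by simp
  qed (use I Dd in auto)
  then show ?thesis using that D0 by blast
qed

subsection \<open>The pseudo-arc density\<close>

context null_curve
begin

definition entry_funs :: "(real \<Rightarrow> complex) set" where
  "entry_funs = {(\<lambda>t. D n t $ i $ j) | n i j. True}"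

lemma entry_in_star_alg: "(\<lambda>t. D n t $ i $ j) \<in> star_alg entry_funs"
  unfolding entry_funs_def by (rule star_alg_base) blast

lemma deriv_closed_entry_funs: "deriv_closed_on I (star_alg entry_funs)"
proof (rule deriv_closed_on_star_alg)
  fix f assume "f \<in> entry_funs"
  then obtain n i j where f: "f = (\<lambda>t. D n t $ i $ j)" unfolding entry_funs_def by blast
  show "\<exists>g\<in>star_alg entry_funs. \<forall>t\<in>I. (f has_vector_derivative g t) (at t)"
    unfolding f by (intro bexI[OF _ entry_in_star_alg[of "Suc n" i j]] ballI deriv_entry)
qed

definition "half_acc_sq t = - Re (det (D 2 t)) / 4"
definition "trace_vel t = Re (D 1 t $1$1 + D 1 t $2$2)"
definition "pseudo_arc t = sgn (trace_vel t) * sqrt (sqrt (half_acc_sq t))"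
definition "half_acc_c t = complex_of_real (sqrt (half_acc_sq t))"
definition "pseudo_arc_c t = complex_of_real (pseudo_arc t)"

lemma half_acc_sq_pos: "t \<in> I \<Longrightarrow> half_acc_sq t > 0"
  using Re_det_D2_neg by (simp add: half_acc_sq_def)

lemma trace_vel_nonzero: "t \<in> I \<Longrightarrow> trace_vel t \<noteq> 0"
  unfolding trace_vel_def by (rule Re_trace_D1_nonzero)

lemma pseudo_arc_nonzero: "t \<in> I \<Longrightarrow> pseudo_arc t \<noteq> 0"
  using half_acc_sq_pos[of t] trace_vel_nonzero[of t] by (simp add: pseudo_arc_def sgn_if)

lemma pseudo_arc_sq: "t \<in> I \<Longrightarrow> pseudo_arc t ^ 2 = sqrt (half_acc_sq t)"
  using half_acc_sq_pos[of t] trace_vel_nonzero[of t]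
  by (simp add: pseudo_arc_def power_mult_distrib sgn_if)

lemma pseudo_arc_trace_pos: "t \<in> I \<Longrightarrow> pseudo_arc t * trace_vel t > 0"
  using half_acc_sq_pos[of t] trace_vel_nonzero[of t]
  by (auto simp: pseudo_arc_def sgn_if zero_less_mult_iff mult_less_0_iff)

lemma half_acc_sq_c_in_star_alg: "(\<lambda>t. complex_of_real (half_acc_sq t)) \<in> star_alg entry_funs"
proof -
  have "(\<lambda>t. complex_of_real (half_acc_sq t)) =
      (\<lambda>t. (-1/8) * ((D 2 t $1$1 * D 2 t $2$2 - D 2 t $1$2 * D 2 t $2$1)
                   + cnj (D 2 t $1$1 * D 2 t $2$2 - D 2 t $1$2 * D 2 t $2$1)))"
  proof
    fix t
    have "complex_of_real (half_acc_sq t) = (-1/8) * (det (D 2 t) + cnj (det (D 2 t)))"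
      by (simp add: half_acc_sq_def complex_eq_iff)
    then show "complex_of_real (half_acc_sq t) = (-1/8) * ((D 2 t $1$1 * D 2 t $2$2 - D 2 t $1$2 * D 2 t $2$1)
                   + cnj (D 2 t $1$1 * D 2 t $2$2 - D 2 t $1$2 * D 2 t $2$1))"
      by (simp only: det_2)
  qed
  also have "\<dots> \<in> star_alg entry_funs"
    by (intro star_alg_mult star_alg_const star_alg_add star_alg_cnj star_alg_diff entry_in_star_alg)
  finally show ?thesis .
qed

definition arc_funs :: "(real \<Rightarrow> complex) set" where
  "arc_funs = insert pseudo_arc_c (insert (\<lambda>t. inverse (pseudo_arc_c t))
     (insert half_acc_c (insert (\<lambda>t. inverse (half_acc_c t)) entry_funs)))"

lemma entry_funs_subset_arc_funs: "entry_funs \<subseteq> arc_funs"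
  by (auto simp: arc_funs_def)

lemma deriv_closed_arc_funs: "deriv_closed_on I (star_alg arc_funs)"
proof -
  let ?B = "insert half_acc_c (insert (\<lambda>t. inverse (half_acc_c t)) entry_funs)"
  have cont_sq: "continuous (at t) half_acc_sq" if "t \<in> I" for t
    using continuous_Re[OF deriv_closed_on_continuous[OF deriv_closed_entry_funs
          half_acc_sq_c_in_star_alg that]] by simp
  have B: "deriv_closed_on I (star_alg ?B)"
  proof (rule deriv_closed_on_star_alg_adjoin_sqrt[OF open_I deriv_closed_entry_funs
        half_acc_sq_c_in_star_alg])
    fix t assume t: "t \<in> I"
    show "continuous (at t) half_acc_c"
      unfolding half_acc_c_def by (intro continuous_intros cont_sq t)
    show "half_acc_c t \<noteq> 0" "half_acc_c t ^ 2 = complex_of_real (half_acc_sq t)"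
      using half_acc_sq_pos[OF t] by (simp_all add: half_acc_c_def flip: of_real_power)
  qed
  have cont_tr: "continuous (at t) trace_vel" if "t \<in> I" for t
    unfolding trace_vel_def
    by (intro continuous_Re continuous_add deriv_closed_on_continuous[OF deriv_closed_entry_funs
          entry_in_star_alg that])
  show ?thesis unfolding arc_funs_def
  proof (rule deriv_closed_on_star_alg_adjoin_sqrt[OF open_I B star_alg_base])
    fix t assume t: "t \<in> I"
    show "continuous (at t) pseudo_arc_c"
      unfolding pseudo_arc_c_def pseudo_arc_def
      by (intro continuous_intros cont_tr cont_sq t trace_vel_nonzero)
    show "pseudo_arc_c t \<noteq> 0" "pseudo_arc_c t ^ 2 = half_acc_c t"
      using pseudo_arc_nonzero[OF t] pseudo_arc_sq[OF t]
      by (simp_all add: pseudo_arc_c_def half_acc_c_def flip: of_real_power)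
  qed simp
qed

lemma arc_fun_in_star_alg:
  "(\<lambda>t. D n t $ i $ j) \<in> star_alg arc_funs" "pseudo_arc_c \<in> star_alg arc_funs"
  "(\<lambda>t. inverse (pseudo_arc_c t)) \<in> star_alg arc_funs"
  by (rule star_alg_mono[OF entry_in_star_alg entry_funs_subset_arc_funs])
    (auto intro: star_alg_base simp: arc_funs_def)

end

subsection \<open>The spinor square\<close>

context null_curve
begin

text \<open>If \<open>\<gamma>' = 2\<omega> u u\<^sup>*\<close>, the symmetric matrix \<open>u u\<^sup>T\<close> is recovered from \<open>\<gamma>\<close> and \<open>\<gamma>'\<close>
  as the following entries.\<close>

definition "spin11 t = \<i>/2 * inverse (pseudo_arc_c t) * (D 1 t$1$1 * D 0 t$1$2 - D 1 t$1$2 * D 0 t$1$1)"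
definition "spin12 t = \<i>/2 * inverse (pseudo_arc_c t) * (D 1 t$1$1 * D 0 t$2$2 - D 1 t$1$2 * D 0 t$2$1)"
definition "spin21 t = \<i>/2 * inverse (pseudo_arc_c t) * (D 1 t$2$1 * D 0 t$1$2 - D 1 t$2$2 * D 0 t$1$1)"
definition "spin22 t = \<i>/2 * inverse (pseudo_arc_c t) * (D 1 t$2$1 * D 0 t$2$2 - D 1 t$2$2 * D 0 t$2$1)"

lemma spin_in_star_alg:
  "spin11 \<in> star_alg arc_funs" "spin12 \<in> star_alg arc_funs"
  "spin21 \<in> star_alg arc_funs" "spin22 \<in> star_alg arc_funs"
  unfolding spin11_def[abs_def] spin12_def[abs_def] spin21_def[abs_def] spin22_def[abs_def]
  by (intro star_alg_mult star_alg_diff star_alg_const arc_fun_in_star_alg)+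

lemma spin21_eq_spin12: "t \<in> I \<Longrightarrow> spin21 t = spin12 t"
proof -
  assume t: "t \<in> I"
  have "D 1 t$2$1 * D 0 t$1$2 - D 1 t$2$2 * D 0 t$1$1 = D 1 t$1$1 * D 0 t$2$2 - D 1 t$1$2 * D 0 t$2$1"
    using det_polar_D0_D1[OF t] unfolding det_polar_def by algebra
  then show ?thesis by (simp add: spin21_def spin12_def)
qed

lemma spin_rank_one: "t \<in> I \<Longrightarrow> spin11 t * spin22 t = spin12 t * spin12 t"
proof -
  assume t: "t \<in> I"
  have d1: "D 1 t$1$1 * D 1 t$2$2 - D 1 t$1$2 * D 1 t$2$1 = 0" using det_D1[OF t] by (simp add: det_2)
  have "spin11 t * spin22 t = spin12 t * spin21 t"
    unfolding spin11_def spin12_def spin21_def spin22_def using d1 by algebra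
  then show ?thesis using spin21_eq_spin12[OF t] by simp
qed

lemma spin_nonzero: "t \<in> I \<Longrightarrow> \<not> (spin11 t = 0 \<and> spin12 t = 0 \<and> spin22 t = 0)"
proof
  assume t: "t \<in> I" and z: "spin11 t = 0 \<and> spin12 t = 0 \<and> spin22 t = 0"
  have iw: "inverse (pseudo_arc_c t) \<noteq> 0" using pseudo_arc_nonzero[OF t] by (simp add: pseudo_arc_c_def)
  have z1: "D 1 t$1$1 * D 0 t$1$2 - D 1 t$1$2 * D 0 t$1$1 = 0" using z iw by (simp add: spin11_def)
  have z2: "D 1 t$1$1 * D 0 t$2$2 - D 1 t$1$2 * D 0 t$2$1 = 0" using z iw by (simp add: spin12_def)
  have z3: "D 1 t$2$1 * D 0 t$1$2 - D 1 t$2$2 * D 0 t$1$1 = 0"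
    using z spin21_eq_spin12[OF t] iw by (simp add: spin21_def)
  have z4: "D 1 t$2$1 * D 0 t$2$2 - D 1 t$2$2 * D 0 t$2$1 = 0" using z iw by (simp add: spin22_def)
  have d: "D 0 t$1$1 * D 0 t$2$2 - D 0 t$1$2 * D 0 t$2$1 = -1" using det_D0[OF t] by (simp add: det_2)
  have "D 1 t$1$1 = 0" "D 1 t$1$2 = 0" using z1 z2 d by algebra+
  moreover have "D 1 t$2$1 = 0" "D 1 t$2$2 = 0" using z3 z4 d by algebra+
  ultimately have "D 1 t = 0" by (simp add: cmat2_eq_iff)
  then show False using D1_nonzero[OF t] by simp
qed

text \<open>A square root of \<open>u u\<^sup>T\<close> is obtained as \<open>u = (u u\<^sup>T) v / \<surd>(v\<^sup>T u u\<^sup>T v)\<close> for a fixed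
  \<open>v = (1, \<mu>)\<close> with \<open>v\<^sup>T u \<noteq> 0\<close> along the whole curve. Such a \<open>\<mu>\<close> exists because
  \<open>u\<^sub>1/u\<^sub>2 = spin12/spin22\<close> is a differentiable function of a real variable, so its range
  is negligible and misses some \<open>-\<mu>\<close>.\<close>

definition "spin_form \<mu> t = spin11 t + 2*\<mu>* spin12 t + \<mu>^2 * spin22 t"

lemma spin_form_in_star_alg: "spin_form \<mu> \<in> star_alg arc_funs"
  unfolding spin_form_def[abs_def]
  by (intro star_alg_add star_alg_mult star_alg_const star_alg_power spin_in_star_alg)

lemma exists_nonvanishing_spin_form: "\<exists>\<mu>. \<forall>t\<in>I. spin_form \<mu> t \<noteq> 0"
proof -
  define S where "S = {t\<in>I. spin22 t \<noteq> 0}"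
  define f where "f t = spin12 t / spin22 t" for t
  obtain d12 where d12: "\<forall>t\<in>I. (spin12 has_vector_derivative d12 t) (at t)"
    using deriv_closed_onD[OF deriv_closed_arc_funs spin_in_star_alg(2)] by blast
  obtain d22 where d22: "\<forall>t\<in>I. (spin22 has_vector_derivative d22 t) (at t)"
    using deriv_closed_onD[OF deriv_closed_arc_funs spin_in_star_alg(4)] by blast
  have "f differentiable_on S"
    unfolding differentiable_on_def
  proof
    fix t assume "t \<in> S"
    then have t: "t \<in> I" and nz: "spin22 t \<noteq> 0" by (auto simp: S_def)
    have "((\<lambda>s. spin12 s * inverse (spin22 s)) has_vector_derivative
            spin12 t * (- d22 t * inverse (spin22 t) * inverse (spin22 t)) + d12 t * inverse (spin22 t)) (at t)"
      by (intro has_vector_derivative_mult has_vector_derivative_inverse nz) (use d12 d22 t in auto)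
    then have "f differentiable (at t)"
      unfolding f_def by (simp add: divide_inverse differentiableI_vector)
    then show "f differentiable (at t within S)" by (rule differentiable_at_withinI)
  qed
  then have "negligible (f ` S)"
    by (intro negligible_differentiable_image_lowdim) auto
  then obtain \<nu> where \<nu>: "\<nu> \<notin> f ` S"
    using non_negligible_UNIV by (metis UNIV_eq_I)
  show ?thesis
  proof (intro exI ballI)
    fix t assume t: "t \<in> I"
    show "spin_form (-\<nu>) t \<noteq> 0"
    proof (cases "spin22 t = 0")
      case True
      then have "spin12 t = 0" using spin_rank_one[OF t] by simp
      then have "spin11 t \<noteq> 0" using spin_nonzero[OF t] True by simp
      then show ?thesis using True \<open>spin12 t = 0\<close> by (simp add: spin_form_def)
    next
      case False
      then have "f t \<noteq> \<nu>" using \<nu> t by (auto simp: S_def)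
      then have ne: "spin12 t - \<nu> * spin22 t \<noteq> 0" using False by (auto simp: f_def field_simps)
      have "spin22 t * spin_form (-\<nu>) t = (spin12 t - \<nu> * spin22 t)^2"
        using spin_rank_one[OF t] by (simp add: spin_form_def algebra_simps power2_eq_square)
      then show ?thesis using ne by auto
    qed
  qed
qed

end

subsection \<open>A smooth spinor along the curve\<close>

locale null_curve_spinor = null_curve +
  fixes \<mu> :: complex and s :: "real \<Rightarrow> complex"
  assumes continuous_s: "continuous_on I s"
    and s_sq: "\<And>t. t \<in> I \<Longrightarrow> s t ^ 2 = spin_form \<mu> t"
    and spin_form_nonzero: "\<And>t. t \<in> I \<Longrightarrow> spin_form \<mu> t \<noteq> 0"
begin

definition spinor_funs :: "(real \<Rightarrow> complex) set" where
  "spinor_funs = insert s (insert (\<lambda>t. inverse (s t)) arc_funs)"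

lemma deriv_closed_spinor_funs: "deriv_closed_on I (star_alg spinor_funs)"
  unfolding spinor_funs_def
proof (rule deriv_closed_on_star_alg_adjoin_sqrt[OF open_I deriv_closed_arc_funs])
  show "spin_form \<mu> \<in> star_alg arc_funs" by (rule spin_form_in_star_alg)
  show "continuous (at t) s" if "t \<in> I" for t
    using continuous_s that open_I by (simp add: continuous_on_eq_continuous_at)
  show "s t \<noteq> 0" if "t \<in> I" for t using s_sq[OF that] spin_form_nonzero[OF that] by fastforce
qed (rule s_sq)

lemma star_alg_arc_funs_subset: "f \<in> star_alg arc_funs \<Longrightarrow> f \<in> star_alg spinor_funs"
  by (erule star_alg_mono) (auto simp: spinor_funs_def)

definition "alg_deriv f = (SOME g. g \<in> star_alg spinor_funs \<and> (\<forall>t\<in>I. (f has_vector_derivative g t) (at t)))"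

lemma alg_deriv:
  assumes "f \<in> star_alg spinor_funs"
  shows "alg_deriv f \<in> star_alg spinor_funs" "\<And>t. t \<in> I \<Longrightarrow> (f has_vector_derivative alg_deriv f t) (at t)"
proof -
  have "\<exists>g. g \<in> star_alg spinor_funs \<and> (\<forall>t\<in>I. (f has_vector_derivative g t) (at t))"
    using deriv_closed_onD[OF deriv_closed_spinor_funs assms] by blast
  from someI_ex[OF this] show "alg_deriv f \<in> star_alg spinor_funs"
    "\<And>t. t \<in> I \<Longrightarrow> (f has_vector_derivative alg_deriv f t) (at t)"
    unfolding alg_deriv_def by auto
qed

definition "u1 t = (spin11 t + \<mu> * spin12 t) / s t"
definition "u2 t = (spin12 t + \<mu> * spin22 t) / s t"

lemma u_in_star_alg: "u1 \<in> star_alg spinor_funs" "u2 \<in> star_alg spinor_funs"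
proof -
  have inv_s: "(\<lambda>t. inverse (s t)) \<in> star_alg spinor_funs"
    by (rule star_alg_base) (simp add: spinor_funs_def)
  have "(\<lambda>t. spin11 t + \<mu> * spin12 t) \<in> star_alg arc_funs" "(\<lambda>t. spin12 t + \<mu> * spin22 t) \<in> star_alg arc_funs"
    by (intro star_alg_add star_alg_mult star_alg_const spin_in_star_alg)+
  then show "u1 \<in> star_alg spinor_funs" "u2 \<in> star_alg spinor_funs"
    unfolding u1_def[abs_def] u2_def[abs_def] divide_inverse
    by (auto intro!: star_alg_mult[OF star_alg_arc_funs_subset inv_s])
qed

lemma u_sq: "t \<in> I \<Longrightarrow> u1 t ^ 2 = spin11 t" "t \<in> I \<Longrightarrow> u1 t * u2 t = spin12 t"
  "t \<in> I \<Longrightarrow> u2 t ^ 2 = spin22 t"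
  unfolding u1_def u2_def
  using symmetric_rank_one_sqrt[OF spin_rank_one s_sq[unfolded spin_form_def]] s_sq spin_form_nonzero
  by force+

lemma D1_eq_spinor:
  assumes t: "t \<in> I"
  shows "frame_column (D 0 t) (u1 t) (u2 t) \<and>
    D 1 t$1$1 = 2 * pseudo_arc_c t * u1 t * cnj (u1 t) \<and> D 1 t$1$2 = 2 * pseudo_arc_c t * u1 t * cnj (u2 t) \<and>
    D 1 t$2$1 = 2 * pseudo_arc_c t * u2 t * cnj (u1 t) \<and> D 1 t$2$2 = 2 * pseudo_arc_c t * u2 t * cnj (u2 t)"
proof -
  have key: "complex_of_real (2 * pseudo_arc t) * (\<i>/2 * inverse (pseudo_arc_c t) * z) = \<i> * z" for z
    using pseudo_arc_nonzero[OF t] by (simp add: pseudo_arc_c_def field_simps)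
  note us = u_sq[OF t] spin21_eq_spin12[OF t, symmetric]
  have P11: "2 * pseudo_arc t * u1 t^2 = \<i>*(D 1 t$1$1 * D 0 t$1$2 - D 1 t$1$2 * D 0 t$1$1)"
    unfolding us spin11_def by (rule key)
  have P12: "2 * pseudo_arc t * (u1 t * u2 t) = \<i>*(D 1 t$1$1 * D 0 t$2$2 - D 1 t$1$2 * D 0 t$2$1)"
    unfolding us spin12_def by (rule key)
  have P21: "2 * pseudo_arc t * (u1 t * u2 t) = \<i>*(D 1 t$2$1 * D 0 t$1$2 - D 1 t$2$2 * D 0 t$1$1)"
    unfolding us spin21_def by (rule key)
  have P22: "2 * pseudo_arc t * u2 t^2 = \<i>*(D 1 t$2$1 * D 0 t$2$2 - D 1 t$2$2 * D 0 t$2$1)"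
    unfolding us spin22_def by (rule key)
  have tr: "pseudo_arc t * Re (D 1 t$1$1 + D 1 t$2$2) > 0"
    using pseudo_arc_trace_pos[OF t] by (simp add: trace_vel_def)
  from spinor_factor_of_null_hermitian[OF hermitian_D[OF t] det_D0[OF t] hermitian_D[OF t]
      P11 P12 P21 P22 tr]
  show ?thesis by (simp add: pseudo_arc_c_def)
qed

end

context null_curve_spinor
begin

definition "du1 = alg_deriv u1"
definition "du2 = alg_deriv u2"
definition "d_pseudo_arc = alg_deriv pseudo_arc_c"

lemma pseudo_arc_c_in_star_alg:
  "pseudo_arc_c \<in> star_alg spinor_funs" "(\<lambda>t. inverse (pseudo_arc_c t)) \<in> star_alg spinor_funs"
  by (intro star_alg_arc_funs_subset arc_fun_in_star_alg)+

lemma du_in_star_alg: "du1 \<in> star_alg spinor_funs" "du2 \<in> star_alg spinor_funs"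
  unfolding du1_def du2_def using alg_deriv(1) u_in_star_alg by auto

lemma has_vector_derivative_u:
  "t \<in> I \<Longrightarrow> (u1 has_vector_derivative du1 t) (at t)"
  "t \<in> I \<Longrightarrow> (u2 has_vector_derivative du2 t) (at t)"
  "t \<in> I \<Longrightarrow> (pseudo_arc_c has_vector_derivative d_pseudo_arc t) (at t)"
  unfolding du1_def du2_def d_pseudo_arc_def using alg_deriv(2) u_in_star_alg pseudo_arc_c_in_star_alg
  by auto

lemma frame_column_u: "t \<in> I \<Longrightarrow> frame_column (D 0 t) (u1 t) (u2 t)"
  using D1_eq_spinor by blast

lemma D1_entries:
  assumes "t \<in> I"
  shows "D 1 t$1$1 = 2 * pseudo_arc_c t * u1 t * cnj (u1 t)" "D 1 t$1$2 = 2 * pseudo_arc_c t * u1 t * cnj (u2 t)"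
    "D 1 t$2$1 = 2 * pseudo_arc_c t * u2 t * cnj (u1 t)" "D 1 t$2$2 = 2 * pseudo_arc_c t * u2 t * cnj (u2 t)"
  using D1_eq_spinor[OF assms] by simp_all

text \<open>In the derivative of the frame-column condition of \<open>u\<close>, the terms coming from
  \<open>\<gamma>' = 2\<omega> u u\<^sup>*\<close> cancel.\<close>

lemma frame_column_du:
  assumes t: "t \<in> I"
  shows "frame_column (D 0 t) (du1 t) (du2 t)"
proof -
  note r = frame_column_u[unfolded frame_column_def] and d = has_vector_derivative_u
  have A: "cnj (du1 t) = - \<i> * ((D 0 t$2$1 * du1 t + D 1 t$2$1 * u1 t) - (D 0 t$1$1 * du2 t + D 1 t$1$1 * u2 t))"
  proof (rule has_vector_derivative_unique_on[OF open_I t])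
    show "cnj (u1 s) = - \<i> * (D 0 s$2$1 * u1 s - D 0 s$1$1 * u2 s)" if "s \<in> I" for s
      using r[OF that] by blast
  qed (intro has_vector_derivative_mult_right has_vector_derivative_diff has_vector_derivative_mult
      has_vector_derivative_cnj deriv_entry_0 d t)+
  have B: "cnj (du2 t) = - \<i> * ((D 0 t$2$2 * du1 t + D 1 t$2$2 * u1 t) - (D 0 t$1$2 * du2 t + D 1 t$1$2 * u2 t))"
  proof (rule has_vector_derivative_unique_on[OF open_I t])
    show "cnj (u2 s) = - \<i> * (D 0 s$2$2 * u1 s - D 0 s$1$2 * u2 s)" if "s \<in> I" for s
      using r[OF that] by blast
  qed (intro has_vector_derivative_mult_right has_vector_derivative_diff has_vector_derivative_mult
      has_vector_derivative_cnj deriv_entry_0 d t)+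
  note e = D1_entries[OF t]
  have "D 1 t$2$1 * u1 t - D 1 t$1$1 * u2 t = 0" "D 1 t$2$2 * u1 t - D 1 t$1$2 * u2 t = 0"
    unfolding e by (simp_all add: algebra_simps)
  then show ?thesis using A B unfolding frame_column_def by (simp add: algebra_simps)
qed

lemma D2_entry:
  assumes t: "t \<in> I" and eq: "\<And>s. s \<in> I \<Longrightarrow> D 1 s$i$j = 2 * pseudo_arc_c s * f s * cnj (g s)"
    and df: "(f has_vector_derivative df) (at t)" and dg: "(g has_vector_derivative dg) (at t)"
  shows "D 2 t$i$j = (2 * d_pseudo_arc t) * f t * cnj (g t) + (2 * pseudo_arc_c t) * (df * cnj (g t) + f t * cnj dg)"
proof -
  have "D 2 t$i$j = 2 * pseudo_arc_c t * f t * cnj dg + (2 * pseudo_arc_c t * df + 2 * d_pseudo_arc t * f t) * cnj (g t)"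
  proof (rule has_vector_derivative_unique_on[OF open_I t eq deriv_entry_1[OF t]])
    show "((\<lambda>s. 2 * pseudo_arc_c s * f s * cnj (g s)) has_vector_derivative
        2 * pseudo_arc_c t * f t * cnj dg + (2 * pseudo_arc_c t * df + 2 * d_pseudo_arc t * f t) * cnj (g t)) (at t)"
      using has_vector_derivative_mult[OF has_vector_derivative_mult[OF
          has_vector_derivative_mult_right[OF has_vector_derivative_u(3)[OF t], of 2] df]
          has_vector_derivative_cnj[OF dg]]
      by simp
  qed
  then show ?thesis by (simp add: algebra_simps)
qed

definition "wronskian t = du1 t * u2 t - du2 t * u1 t"

lemma wronskian_real: "t \<in> I \<Longrightarrow> cnj (wronskian t) = wronskian t"
  unfolding wronskian_def by (rule frame_column_det_real[OF det_D0 frame_column_du frame_column_u])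

lemma det_D2_eq_wronskian:
  assumes t: "t \<in> I"
  shows "det (D 2 t) = - ((2 * pseudo_arc_c t)^2) * wronskian t * cnj (wronskian t)"
proof -
  note d = has_vector_derivative_u[OF t] and e = D1_entries
  have "D 2 t$1$1 = (2 * d_pseudo_arc t) * u1 t * cnj (u1 t) + (2 * pseudo_arc_c t) * (du1 t * cnj (u1 t) + u1 t * cnj (du1 t))"
    by (rule D2_entry[OF t e(1) d(1) d(1)])
  moreover have "D 2 t$1$2 = (2 * d_pseudo_arc t) * u1 t * cnj (u2 t) + (2 * pseudo_arc_c t) * (du1 t * cnj (u2 t) + u1 t * cnj (du2 t))"
    by (rule D2_entry[OF t e(2) d(1) d(2)])
  moreover have "D 2 t$2$1 = (2 * d_pseudo_arc t) * u2 t * cnj (u1 t) + (2 * pseudo_arc_c t) * (du2 t * cnj (u1 t) + u2 t * cnj (du1 t))"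
    by (rule D2_entry[OF t e(3) d(2) d(1)])
  moreover have "D 2 t$2$2 = (2 * d_pseudo_arc t) * u2 t * cnj (u2 t) + (2 * pseudo_arc_c t) * (du2 t * cnj (u2 t) + u2 t * cnj (du2 t))"
    by (rule D2_entry[OF t e(4) d(2) d(2)])
  moreover have "cnj (wronskian t) = cnj (du1 t) * cnj (u2 t) - cnj (du2 t) * cnj (u1 t)"
    by (simp add: wronskian_def)
  ultimately show ?thesis unfolding det_2 wronskian_def by (simp only: det_sum_rank_one)
qed

lemma wronskian_sq: "t \<in> I \<Longrightarrow> wronskian t * wronskian t = pseudo_arc_c t * pseudo_arc_c t"
proof -
  assume t: "t \<in> I"
  define d where "d = Re (wronskian t)"
  have r: "wronskian t = complex_of_real d" unfolding d_def by (rule cnj_eq_imp_of_real_Re[OF wronskian_real[OF t]])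
  have "det (D 2 t) = complex_of_real (-4 * (pseudo_arc t)^2 * d^2)"
    using det_D2_eq_wronskian[OF t] unfolding r pseudo_arc_c_def by (simp add: power2_eq_square)
  then have "half_acc_sq t = (pseudo_arc t)^2 * d^2" by (simp add: half_acc_sq_def)
  moreover have "half_acc_sq t = (pseudo_arc t)^2 * (pseudo_arc t)^2"
    using pseudo_arc_sq[OF t] half_acc_sq_pos[OF t] by simp
  ultimately have "(pseudo_arc t)^2 * d^2 = (pseudo_arc t)^2 * (pseudo_arc t)^2" by simp
  moreover have "(pseudo_arc t)^2 \<noteq> 0" using pseudo_arc_nonzero[OF t] by simp
  ultimately have "d^2 = (pseudo_arc t)^2" using mult_left_cancel by blast
  then have "complex_of_real (d * d) = complex_of_real (pseudo_arc t * pseudo_arc t)"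
    by (simp add: power2_eq_square)
  then show ?thesis unfolding r pseudo_arc_c_def by simp
qed

text \<open>\<open>wronskian / \<omega>\<close> is a continuous function with values \<open>\<plusminus>1\<close>, so it is constant.\<close>

lemma exists_sign_wronskian:
  "\<exists>\<epsilon>. \<epsilon> \<in> {1, -1} \<and> (\<forall>t\<in>I. wronskian t = complex_of_real \<epsilon> * pseudo_arc_c t)"
proof -
  define e where "e t = wronskian t * inverse (pseudo_arc_c t)" for t
  have e_in: "e \<in> star_alg spinor_funs"
    unfolding e_def[abs_def] wronskian_def[abs_def]
    by (intro star_alg_mult star_alg_diff du_in_star_alg u_in_star_alg pseudo_arc_c_in_star_alg)
  have e_sq: "e t * e t = 1" if "t \<in> I" for t
    using wronskian_sq[OF that] pseudo_arc_nonzero[OF that]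
    by (simp add: e_def pseudo_arc_c_def field_simps)
  have de0: "alg_deriv e t = 0" if t: "t \<in> I" for t
  proof -
    have "e t * alg_deriv e t + alg_deriv e t * e t = 0"
      by (rule has_vector_derivative_const_on[OF open_I t e_sq
            has_vector_derivative_mult[OF alg_deriv(2)[OF e_in t] alg_deriv(2)[OF e_in t]]])
    moreover have "e t \<noteq> 0" using e_sq[OF t] by auto
    ultimately show ?thesis by (simp add: algebra_simps)
  qed
  obtain c where c: "\<And>t. t \<in> I \<Longrightarrow> e t = c"
  proof (rule has_vector_derivative_zero_constant[OF convex_I])
    show "(e has_vector_derivative 0) (at t within I)" if "t \<in> I" for t
      using alg_deriv(2)[OF e_in that] de0[OF that] by (simp add: has_vector_derivative_at_within)
  qed blast
  obtain t0 where t0: "t0 \<in> I" using nonempty_I by blast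
  have "cnj (e t0) = e t0" using wronskian_real[OF t0] by (simp add: e_def pseudo_arc_c_def)
  then have r: "e t0 = complex_of_real (Re (e t0))" by (rule cnj_eq_imp_of_real_Re)
  then have "Re (e t0) * Re (e t0) = 1" using e_sq[OF t0] by (metis of_real_eq_1_iff of_real_mult)
  then have "Re (e t0) \<in> {1, -1}" by (auto simp: square_eq_1_iff)
  moreover have "wronskian t = complex_of_real (Re (e t0)) * pseudo_arc_c t" if "t \<in> I" for t
    using c[OF that] c[OF t0] r pseudo_arc_nonzero[OF that] by (simp add: e_def pseudo_arc_c_def field_simps)
  ultimately show ?thesis by blast
qed

definition "sign_eps = (SOME \<epsilon>. \<epsilon> \<in> {1, -1} \<and> (\<forall>t\<in>I. wronskian t = complex_of_real \<epsilon> * pseudo_arc_c t))"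

lemma sign_eps: "sign_eps \<in> {1, -1}" "\<And>t. t \<in> I \<Longrightarrow> wronskian t = complex_of_real sign_eps * pseudo_arc_c t"
  using someI_ex[OF exists_sign_wronskian] unfolding sign_eps_def[symmetric] by auto

end

subsection \<open>The canonical frame\<close>

context null_curve_spinor
begin

definition "e1 t = complex_of_real sign_eps * inverse (pseudo_arc_c t) * du1 t"
definition "e2 t = complex_of_real sign_eps * inverse (pseudo_arc_c t) * du2 t"
definition "frame t = mat2 (e1 t) (u1 t) (e2 t) (u2 t)"

lemma e_in_star_alg: "e1 \<in> star_alg spinor_funs" "e2 \<in> star_alg spinor_funs"
  unfolding e1_def[abs_def] e2_def[abs_def]
  by (intro star_alg_mult star_alg_const du_in_star_alg pseudo_arc_c_in_star_alg)+

lemma sign_eps_sq: "complex_of_real sign_eps * complex_of_real sign_eps = 1"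
  using sign_eps(1) by auto

lemma det_frame: "t \<in> I \<Longrightarrow> e1 t * u2 t - u1 t * e2 t = 1"
proof -
  assume t: "t \<in> I"
  have "e1 t * u2 t - u1 t * e2 t = complex_of_real sign_eps * inverse (pseudo_arc_c t) * wronskian t"
    by (simp add: e1_def e2_def wronskian_def algebra_simps)
  also have "\<dots> = 1"
    using sign_eps(2)[OF t] sign_eps_sq pseudo_arc_nonzero[OF t] by (simp add: pseudo_arc_c_def field_simps)
  finally show ?thesis .
qed

lemma frame_column_e: "t \<in> I \<Longrightarrow> frame_column (D 0 t) (e1 t) (e2 t)"
  using frame_column_scale[OF frame_column_du, of t "sign_eps / pseudo_arc t"]
  by (simp add: e1_def e2_def pseudo_arc_c_def divide_inverse mult.assoc)

lemma frame_projects: "t \<in> I \<Longrightarrow> frame t ** J_mat ** adj (frame t) = D 0 t"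
  unfolding frame_def by (rule frame_columns_project[OF hermitian_D det_D0 frame_column_e frame_column_u det_frame])

lemma du_eq_e:
  assumes t: "t \<in> I"
  shows "du1 t = pseudo_arc_c t * complex_of_real sign_eps * e1 t"
    "du2 t = pseudo_arc_c t * complex_of_real sign_eps * e2 t"
  using sign_eps_sq pseudo_arc_nonzero[OF t]
  by (simp_all add: e1_def e2_def pseudo_arc_c_def field_simps)

definition "de1 = alg_deriv e1"
definition "de2 = alg_deriv e2"

lemma has_vector_derivative_e:
  "t \<in> I \<Longrightarrow> (e1 has_vector_derivative de1 t) (at t)"
  "t \<in> I \<Longrightarrow> (e2 has_vector_derivative de2 t) (at t)"
  unfolding de1_def de2_def using alg_deriv(2) e_in_star_alg by auto

text \<open>The lower-left entry of the Maurer-Cartan form \<open>\<Gamma>\<^sup>-\<^sup>1 \<Gamma>'\<close>.\<close>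

definition "mc_lower t = e1 t * de2 t - e2 t * de1 t"

lemma mc_lower_in_star_alg: "mc_lower \<in> star_alg spinor_funs"
  unfolding mc_lower_def[abs_def] de1_def de2_def
  by (intro star_alg_mult star_alg_diff e_in_star_alg alg_deriv(1))

lemma de_eq_mc_lower:
  assumes t: "t \<in> I"
  shows "de1 t = mc_lower t * u1 t" "de2 t = mc_lower t * u2 t"
proof -
  note d = has_vector_derivative_u[OF t] has_vector_derivative_e[OF t]
  have "(e1 t * du2 t + de1 t * u2 t) - (u1 t * de2 t + du1 t * e2 t) = 0"
    by (rule has_vector_derivative_const_on[OF open_I t det_frame
          has_vector_derivative_diff[OF has_vector_derivative_mult[OF d(4) d(2)]
            has_vector_derivative_mult[OF d(1) d(5)]]])
  moreover have "e1 t * du2 t - du1 t * e2 t = 0" unfolding du_eq_e[OF t] by (simp add: algebra_simps)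
  ultimately have "de1 t * u2 t - u1 t * de2 t = 0" by (simp add: algebra_simps)
  then show "de1 t = mc_lower t * u1 t" "de2 t = mc_lower t * u2 t"
    using det_frame[OF t] unfolding mc_lower_def by algebra+
qed

text \<open>Differentiating a diagonal entry of \<open>\<gamma> = \<Gamma> J \<Gamma>\<^sup>*\<close> and comparing with
  \<open>\<gamma>' = 2\<omega> u u\<^sup>*\<close> shows \<open>Im (mc_lower) = \<omega>\<close> wherever \<open>u\<^sub>i \<noteq> 0\<close>.\<close>

lemma Im_mc_lower_diag:
  assumes t: "t \<in> I"
    and eq: "\<And>s. s \<in> I \<Longrightarrow> D 0 s $i$i = \<i> * (f s * cnj (g s)) - \<i> * (g s * cnj (f s))"
    and df: "(f has_vector_derivative df) (at t)" and dg: "(g has_vector_derivative dg) (at t)"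
    and dfe: "df = pseudo_arc_c t * complex_of_real sign_eps * g t" and dge: "dg = mc_lower t * f t"
    and d1: "D 1 t $i$i = 2 * pseudo_arc_c t * f t * cnj (f t)"
  shows "(complex_of_real (2 * Im (mc_lower t)) - 2 * pseudo_arc_c t) * (f t * cnj (f t)) = 0"
proof -
  have "D 1 t $i$i = \<i> * (f t * cnj dg + df * cnj (g t)) - \<i> * (g t * cnj df + dg * cnj (f t))"
  proof (rule has_vector_derivative_unique_on[OF open_I t eq deriv_entry_0[OF t]])
    show "((\<lambda>s. \<i> * (f s * cnj (g s)) - \<i> * (g s * cnj (f s))) has_vector_derivative
        \<i> * (f t * cnj dg + df * cnj (g t)) - \<i> * (g t * cnj df + dg * cnj (f t))) (at t)"
      by (intro has_vector_derivative_diff has_vector_derivative_mult_right has_vector_derivative_mult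
          has_vector_derivative_cnj df dg)
  qed
  also have "\<dots> = \<i> * (cnj (mc_lower t) - mc_lower t) * (f t * cnj (f t))"
    unfolding dfe dge by (simp add: pseudo_arc_c_def algebra_simps)
  also have "\<i> * (cnj (mc_lower t) - mc_lower t) = complex_of_real (2 * Im (mc_lower t))"
    by (simp add: complex_eq_iff)
  finally have "2 * pseudo_arc_c t * f t * cnj (f t) = complex_of_real (2 * Im (mc_lower t)) * (f t * cnj (f t))"
    unfolding d1 .
  then show ?thesis by (simp add: algebra_simps) metis
qed

lemma Im_mc_lower: "t \<in> I \<Longrightarrow> Im (mc_lower t) = pseudo_arc t"
proof -
  assume t: "t \<in> I"
  have diag: "D 0 s $1$1 = \<i> * (u1 s * cnj (e1 s)) - \<i> * (e1 s * cnj (u1 s))"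
    "D 0 s $2$2 = \<i> * (u2 s * cnj (e2 s)) - \<i> * (e2 s * cnj (u2 s))" if "s \<in> I" for s
    using arg_cong[OF frame_projects[OF that], of "\<lambda>M. M$1$1"] arg_cong[OF frame_projects[OF that], of "\<lambda>M. M$2$2"]
    by (simp_all add: frame_def J_mat_def adj_mat2 mat2_mult algebra_simps)
  note d = has_vector_derivative_u[OF t] has_vector_derivative_e[OF t]
  have "(complex_of_real (2 * Im (mc_lower t)) - 2 * pseudo_arc_c t) * (u1 t * cnj (u1 t)) = 0"
    by (rule Im_mc_lower_diag[OF t diag(1) d(1) d(4) du_eq_e(1)[OF t] de_eq_mc_lower(1)[OF t] D1_entries(1)[OF t]])
  moreover have "(complex_of_real (2 * Im (mc_lower t)) - 2 * pseudo_arc_c t) * (u2 t * cnj (u2 t)) = 0"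
    by (rule Im_mc_lower_diag[OF t diag(2) d(2) d(5) du_eq_e(2)[OF t] de_eq_mc_lower(2)[OF t] D1_entries(4)[OF t]])
  moreover have "u1 t \<noteq> 0 \<or> u2 t \<noteq> 0" using det_frame[OF t] by auto
  ultimately have "complex_of_real (2 * Im (mc_lower t)) - 2 * pseudo_arc_c t = 0" by auto
  then show ?thesis by (simp add: pseudo_arc_c_def complex_eq_iff)
qed

definition "curvature t = Re (mc_lower t) / pseudo_arc t"

lemma maurer_cartan_frame:
  assumes t: "t \<in> I"
  shows "matrix_inv (frame t) ** vector_derivative frame (at t)
    = pseudo_arc t *\<^sub>R mat2 0 (complex_of_real sign_eps) (complex_of_real (curvature t) + \<i>) 0"
proof -
  have "(frame has_vector_derivative mat2 (de1 t) (du1 t) (de2 t) (du2 t)) (at t)"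
    unfolding frame_def[abs_def] by (intro has_vector_derivative_mat2 has_vector_derivative_e has_vector_derivative_u t)
  then have vd: "vector_derivative frame (at t) = mat2 (de1 t) (du1 t) (de2 t) (du2 t)"
    by (rule vector_derivative_at)
  have mi: "matrix_inv (frame t) = mat2 (u2 t) (- u1 t) (- e2 t) (e1 t)"
    unfolding frame_def by (rule matrix_inv_mat2[OF det_frame[OF t]])
  have "matrix_inv (frame t) ** vector_derivative frame (at t)
      = mat2 (u2 t * de1 t - u1 t * de2 t) (u2 t * du1 t - u1 t * du2 t)
             (e1 t * de2 t - e2 t * de1 t) (e1 t * du2 t - e2 t * du1 t)"
    unfolding mi vd mat2_mult by (simp add: algebra_simps)
  also have "\<dots> = mat2 0 (pseudo_arc_c t * complex_of_real sign_eps) (mc_lower t) 0"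
  proof -
    have "u2 t * du1 t - u1 t * du2 t = pseudo_arc_c t * complex_of_real sign_eps * (e1 t * u2 t - u1 t * e2 t)"
      by (simp add: du_eq_e[OF t] algebra_simps)
    then have b: "u2 t * du1 t - u1 t * du2 t = pseudo_arc_c t * complex_of_real sign_eps"
      using det_frame[OF t] by simp
    have a: "u2 t * de1 t - u1 t * de2 t = 0" by (simp add: de_eq_mc_lower[OF t] algebra_simps)
    have c: "e1 t * du2 t - e2 t * du1 t = 0" by (simp add: du_eq_e[OF t] algebra_simps)
    show ?thesis unfolding mat2_eq_iff using a b c by (simp add: mc_lower_def)
  qed
  also have "\<dots> = pseudo_arc t *\<^sub>R mat2 0 (complex_of_real sign_eps) (complex_of_real (curvature t) + \<i>) 0"
  proof -
    have "complex_of_real (pseudo_arc t) * (complex_of_real (curvature t) + \<i>) = mc_lower t"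
      using Im_mc_lower[OF t] pseudo_arc_nonzero[OF t] by (simp add: curvature_def complex_eq_iff)
    then show ?thesis unfolding scaleR_mat2 mat2_eq_iff by (simp add: scaleR_conv_of_real pseudo_arc_c_def)
  qed
  finally show ?thesis .
qed

lemma canonical_frame_data_frame: "canonical_frame_data I (D 0) frame sign_eps pseudo_arc curvature"
  unfolding canonical_frame_data_def frame_field_def
proof (intro conjI ballI)
  show "smooth_on I frame"
    unfolding frame_def[abs_def]
    by (rule smooth_on_mat2[OF deriv_closed_spinor_funs e_in_star_alg(1) u_in_star_alg(1)
          e_in_star_alg(2) u_in_star_alg(2)])
  show "frame t \<in> SL2C" if "t \<in> I" for t
    using det_frame[OF that] by (simp add: SL2C_def frame_def det_mat2)
  show "D 0 t = frame t ** J_mat ** adj (frame t)" if "t \<in> I" for t using frame_projects[OF that] by simp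
  show "sign_eps \<in> {1, -1}" by (rule sign_eps(1))
  show "smooth_on I pseudo_arc"
    using smooth_on_Re_deriv_closed[OF deriv_closed_spinor_funs pseudo_arc_c_in_star_alg(1)]
    by (simp add: pseudo_arc_c_def)
  show "pseudo_arc t \<noteq> 0" if "t \<in> I" for t by (rule pseudo_arc_nonzero[OF that])
  have "(\<lambda>t. (mc_lower t + cnj (mc_lower t)) * (1/2) * inverse (pseudo_arc_c t)) \<in> star_alg spinor_funs"
    by (intro star_alg_mult star_alg_add star_alg_cnj star_alg_const mc_lower_in_star_alg
        pseudo_arc_c_in_star_alg)
  from smooth_on_Re_deriv_closed[OF deriv_closed_spinor_funs this]
  have "smooth_on I (\<lambda>t. Re ((mc_lower t + cnj (mc_lower t)) * (1/2) * inverse (pseudo_arc_c t)))" .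
  moreover have "(\<lambda>t. Re ((mc_lower t + cnj (mc_lower t)) * (1/2) * inverse (pseudo_arc_c t))) = curvature"
  proof
    fix t
    have "(mc_lower t + cnj (mc_lower t)) * (1/2) * inverse (pseudo_arc_c t) = complex_of_real (curvature t)"
      unfolding complex_add_cnj pseudo_arc_c_def curvature_def by (simp add: field_simps)
    then show "Re ((mc_lower t + cnj (mc_lower t)) * (1/2) * inverse (pseudo_arc_c t)) = curvature t"
      by simp
  qed
  ultimately show "smooth_on I curvature" by simp
  show "matrix_inv (frame t) ** vector_derivative frame (at t)
      = pseudo_arc t *\<^sub>R mat2 0 (complex_of_real sign_eps) (complex_of_real (curvature t) + \<i>) 0"
    if "t \<in> I" for t by (rule maurer_cartan_frame[OF that])
qed

end

lemma exists_canonical_frame: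
  assumes I: "open_interval I" and \<gamma>: "null_curve_no_flex I \<gamma>"
  shows "\<exists>\<Gamma> \<epsilon> w k. canonical_frame_data I \<gamma> \<Gamma> \<epsilon> w k"
proof -
  obtain D where D0: "D 0 = \<gamma>" and "null_curve I D" using null_curve_no_flexE[OF I \<gamma>] .
  interpret null_curve I D by fact
  obtain \<mu> where \<mu>: "\<And>t. t \<in> I \<Longrightarrow> spin_form \<mu> t \<noteq> 0"
    using exists_nonvanishing_spin_form by blast
  have "continuous_on I (spin_form \<mu>)"
    by (intro continuous_at_imp_continuous_on ballI
        deriv_closed_on_continuous[OF deriv_closed_arc_funs spin_form_in_star_alg])
  from continuous_sqrt_on_contractible[OF this convex_imp_contractible[OF convex_I] \<mu>]
  obtain s where "continuous_on I s" "\<And>t. t \<in> I \<Longrightarrow> spin_form \<mu> t = (s t)^2"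
    by blast
  then interpret null_curve_spinor I D \<mu> s
    by unfold_locales (use \<mu> in auto)
  show ?thesis using canonical_frame_data_frame D0 by blast
qed

subsection \<open>Uniqueness of the canonical frame\<close>

lemma has_vector_derivative_canonical_frame:
  assumes c: "canonical_frame_data I \<gamma> G \<epsilon> w k" and t: "t \<in> I"
  shows "(G has_vector_derivative
    G t ** (w t *\<^sub>R mat2 0 (complex_of_real \<epsilon>) (complex_of_real (k t) + \<i>) 0)) (at t)"
proof -
  have sm: "smooth_on I G" and sl: "G t \<in> SL2C"
    and mc: "matrix_inv (G t) ** vector_derivative G (at t)
      = w t *\<^sub>R mat2 0 (complex_of_real \<epsilon>) (complex_of_real (k t) + \<i>) 0"
    using c t unfolding canonical_frame_data_def frame_field_def by auto
  obtain D where D0: "D 0 = G" and Dd: "\<And>n t. t \<in> I \<Longrightarrow> (D n has_vector_derivative D (Suc n) t) (at t)"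
    using sm unfolding smooth_on_def by blast
  have gd: "(G has_vector_derivative D 1 t) (at t)" using Dd[OF t, of 0] D0 by simp
  have dt: "G t$1$1 * G t$2$2 - G t$1$2 * G t$2$1 = 1" using sl by (simp add: SL2C_def det_2)
  have "G t ** matrix_inv (G t) = mat 1"
    using dt by (subst (1 2) mat2_eta) (simp add: matrix_inv_mat2 mat2_mult mat_1_mat2 mat2_eq_iff algebra_simps)
  then have "D 1 t = G t ** (matrix_inv (G t) ** vector_derivative G (at t))"
    unfolding matrix_mul_assoc vector_derivative_at[OF gd] by (simp add: matrix_mul_lid)
  then show ?thesis using gd unfolding mc by simp
qed

lemma mat2_mult_canonical_form:
  "mat2 a b c d ** (w *\<^sub>R mat2 0 (complex_of_real \<epsilon>) (complex_of_real k + \<i>) 0)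
    = mat2 (b * (complex_of_real w * (complex_of_real k + \<i>))) (a * (complex_of_real w * complex_of_real \<epsilon>))
        (d * (complex_of_real w * (complex_of_real k + \<i>))) (c * (complex_of_real w * complex_of_real \<epsilon>))"
  unfolding scaleR_mat2 mat2_mult by (simp add: scaleR_conv_of_real mult.commute)

lemma transition_scale_unit:
  fixes w1 w2 e1 e2 y1 y2 :: real
  assumes e: "e1 \<in> {1,-1}" "e2 \<in> {1,-1}" and w: "w1 \<noteq> 0" "w2 \<noteq> 0"
    and h1: "w1*y1 = w2*y2" and h2: "w2*e2*y1 = w1*e1*y2" and h3: "y1*y2 = 1"
  shows "y1 = y2 \<and> y1*y1 = 1"
proof -
  have y1: "y1 \<noteq> 0" using h3 by auto
  have y2: "y2 = w1*y1/w2" using h1 w by (simp add: field_simps)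
  have "w2*e2*y1*w2 = w1*e1*(w1*y1)" using h2 unfolding y2 using w by (simp add: field_simps)
  then have "(w2*w2*e2 - w1*w1*e1) * y1 = 0" by (simp add: algebra_simps)
  then have q: "w2*w2*e2 = w1*w1*e1" using y1 by simp
  have "w1*w1 > 0" "w2*w2 > 0" using w by (metis not_real_square_gt_zero)+
  then have "e1 = e2" using q e by auto
  then have "w2*w2 = w1*w1" using q e by auto
  then have "w2 = w1 \<or> w2 = -w1" by (metis square_eq_iff)
  moreover have yw: "y1*y1*w1 = w2" using h3 unfolding y2 using w by (simp add: field_simps)
  moreover have "y1*y1 > 0" using y1 by (metis not_real_square_gt_zero)
  ultimately have "w2 = w1"
  proof (elim disjE)
    assume "w2 = -w1"
    with yw have "(y1*y1 + 1) * w1 = 0" by (simp add: algebra_simps)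
    with w(1) \<open>y1*y1 > 0\<close> show ?thesis by simp
  qed
  then show ?thesis using h1 yw w by auto
qed

locale canonical_frame_pair =
  fixes I :: "real set" and \<gamma> G H :: "real \<Rightarrow> cmat2"
    and \<epsilon>1 \<epsilon>2 :: real and w1 k1 w2 k2 :: "real \<Rightarrow> real"
  assumes interval: "open_interval I"
    and c1: "canonical_frame_data I \<gamma> G \<epsilon>1 w1 k1"
    and c2: "canonical_frame_data I \<gamma> H \<epsilon>2 w2 k2"
begin

lemma open_I: "open I" and convex_I: "convex I"
  using interval unfolding open_interval_def by (auto simp: is_interval_convex)

definition "a t = G t$1$1"
definition "b t = G t$1$2"
definition "c t = G t$2$1"
definition "d t = G t$2$2"
definition "p t = H t$1$1"
definition "q t = H t$1$2"
definition "r t = H t$2$1"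
definition "s t = H t$2$2"
definition "W1 t = complex_of_real (w1 t) * (complex_of_real (k1 t) + \<i>)"
definition "W2 t = complex_of_real (w2 t) * (complex_of_real (k2 t) + \<i>)"
definition "E1 t = complex_of_real (w1 t) * complex_of_real \<epsilon>1"
definition "E2 t = complex_of_real (w2 t) * complex_of_real \<epsilon>2"

lemma G_eq_mat2: "G t = mat2 (a t) (b t) (c t) (d t)"
  unfolding a_def b_def c_def d_def by (rule mat2_eta)

lemma H_eq_mat2: "H t = mat2 (p t) (q t) (r t) (s t)"
  unfolding p_def q_def r_def s_def by (rule mat2_eta)

lemma has_vector_derivative_G:
  assumes "t \<in> I"
  shows "(G has_vector_derivative mat2 (b t * W1 t) (a t * E1 t) (d t * W1 t) (c t * E1 t)) (at t)"
proof -
  have "G t ** (w1 t *\<^sub>R mat2 0 (complex_of_real \<epsilon>1) (complex_of_real (k1 t) + \<i>) 0)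
      = mat2 (b t * W1 t) (a t * E1 t) (d t * W1 t) (c t * E1 t)"
    by (simp only: G_eq_mat2 mat2_mult_canonical_form W1_def E1_def)
  then show ?thesis using has_vector_derivative_canonical_frame[OF c1 assms] by (simp only:)
qed

lemma has_vector_derivative_H:
  assumes "t \<in> I"
  shows "(H has_vector_derivative mat2 (q t * W2 t) (p t * E2 t) (s t * W2 t) (r t * E2 t)) (at t)"
proof -
  have "H t ** (w2 t *\<^sub>R mat2 0 (complex_of_real \<epsilon>2) (complex_of_real (k2 t) + \<i>) 0)
      = mat2 (q t * W2 t) (p t * E2 t) (s t * W2 t) (r t * E2 t)"
    by (simp only: H_eq_mat2 mat2_mult_canonical_form W2_def E2_def)
  then show ?thesis using has_vector_derivative_canonical_frame[OF c2 assms] by (simp only:)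
qed

lemma has_vector_derivative_entries: assumes t: "t \<in> I"
  shows "(a has_vector_derivative b t * W1 t) (at t)" "(b has_vector_derivative a t * E1 t) (at t)"
    "(c has_vector_derivative d t * W1 t) (at t)" "(d has_vector_derivative c t * E1 t) (at t)"
    "(p has_vector_derivative q t * W2 t) (at t)" "(q has_vector_derivative p t * E2 t) (at t)"
    "(r has_vector_derivative s t * W2 t) (at t)" "(s has_vector_derivative r t * E2 t) (at t)"
proof -
  note g = has_vector_derivative_entry[OF has_vector_derivative_G[OF t]]
    and h = has_vector_derivative_entry[OF has_vector_derivative_H[OF t]]
  show "(a has_vector_derivative b t * W1 t) (at t)" using g[where i=1 and j=1] unfolding a_def[abs_def] b_def by simp
  show "(b has_vector_derivative a t * E1 t) (at t)" using g[where i=1 and j=2] unfolding b_def[abs_def] a_def by simp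
  show "(c has_vector_derivative d t * W1 t) (at t)" using g[where i=2 and j=1] unfolding c_def[abs_def] d_def by simp
  show "(d has_vector_derivative c t * E1 t) (at t)" using g[where i=2 and j=2] unfolding d_def[abs_def] c_def by simp
  show "(p has_vector_derivative q t * W2 t) (at t)" using h[where i=1 and j=1] unfolding p_def[abs_def] q_def by simp
  show "(q has_vector_derivative p t * E2 t) (at t)" using h[where i=1 and j=2] unfolding q_def[abs_def] p_def by simp
  show "(r has_vector_derivative s t * W2 t) (at t)" using h[where i=2 and j=1] unfolding r_def[abs_def] s_def by simp
  show "(s has_vector_derivative r t * E2 t) (at t)" using h[where i=2 and j=2] unfolding s_def[abs_def] r_def by simp
qed

lemma det_G_H: assumes t: "t \<in> I" shows "a t * d t - b t * c t = 1" "p t * s t - q t * r t = 1"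
proof -
  have "G t \<in> SL2C" "H t \<in> SL2C" using c1 c2 t unfolding canonical_frame_data_def frame_field_def by auto
  then show "a t * d t - b t * c t = 1" "p t * s t - q t * r t = 1"
    unfolding SL2C_def a_def b_def c_def d_def p_def q_def r_def s_def by (simp_all add: det_2)
qed

lemma frame_columns_G_H: assumes t: "t \<in> I"
  shows "det (\<gamma> t) = -1" "frame_column (\<gamma> t) (a t) (c t)" "frame_column (\<gamma> t) (b t) (d t)"
    "frame_column (\<gamma> t) (p t) (r t)" "frame_column (\<gamma> t) (q t) (s t)"
proof -
  have g1: "\<gamma> t = G t ** J_mat ** adj (G t)" and g2: "\<gamma> t = H t ** J_mat ** adj (H t)"
    using c1 c2 t unfolding canonical_frame_data_def frame_field_def by auto
  note f1 = frame_columns[OF det_G_H(1)[OF t] g1[unfolded G_eq_mat2[of t]]]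
    and f2 = frame_columns[OF det_G_H(2)[OF t] g2[unfolded H_eq_mat2[of t]]]
  show "det (\<gamma> t) = -1" "frame_column (\<gamma> t) (a t) (c t)" "frame_column (\<gamma> t) (b t) (d t)"
    "frame_column (\<gamma> t) (p t) (r t)" "frame_column (\<gamma> t) (q t) (s t)" using f1 f2 by auto
qed

text \<open>The entries of the transition matrix \<open>G\<^sup>-\<^sup>1 H\<close>.\<close>

definition "y11 t = p t * d t - r t * b t"
definition "y21 t = a t * r t - c t * p t"
definition "y12 t = q t * d t - s t * b t"
definition "y22 t = a t * s t - c t * q t"

lemma transition_real: assumes t: "t \<in> I"
  shows "cnj (y11 t) = y11 t" "cnj (y21 t) = y21 t" "cnj (y12 t) = y12 t" "cnj (y22 t) = y22 t"
  unfolding y11_def y21_def y12_def y22_def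
  by (rule frame_column_det_real[OF frame_columns_G_H(1)[OF t] frame_columns_G_H(4)[OF t] frame_columns_G_H(3)[OF t]],
      rule frame_column_det_real[OF frame_columns_G_H(1)[OF t] frame_columns_G_H(2)[OF t] frame_columns_G_H(4)[OF t]],
      rule frame_column_det_real[OF frame_columns_G_H(1)[OF t] frame_columns_G_H(5)[OF t] frame_columns_G_H(3)[OF t]],
      rule frame_column_det_real[OF frame_columns_G_H(1)[OF t] frame_columns_G_H(2)[OF t] frame_columns_G_H(5)[OF t]])

lemma H_eq_G_transition: assumes t: "t \<in> I"
  shows "p t = y11 t * a t + y21 t * b t" "r t = y11 t * c t + y21 t * d t"
    "q t = y12 t * a t + y22 t * b t" "s t = y12 t * c t + y22 t * d t"
  unfolding y11_def y21_def y12_def y22_def using det_G_H[OF t] by algebra+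

lemma det_transition: assumes t: "t \<in> I" shows "y11 t * y22 t - y12 t * y21 t = 1"
  unfolding y11_def y21_def y12_def y22_def using det_G_H[OF t] by algebra

lemma has_vector_derivative_transition: assumes t: "t \<in> I"
  shows "(y11 has_vector_derivative W2 t * y12 t - E1 t * y21 t) (at t)"
    "(y21 has_vector_derivative W2 t * y22 t - W1 t * y11 t) (at t)"
    "(y12 has_vector_derivative E2 t * y11 t - E1 t * y22 t) (at t)"
    "(y22 has_vector_derivative E2 t * y21 t - W1 t * y12 t) (at t)"
proof -
  note e = has_vector_derivative_entries[OF t]
  show "(y11 has_vector_derivative W2 t * y12 t - E1 t * y21 t) (at t)"
    unfolding y11_def[abs_def]
    using has_vector_derivative_diff[OF has_vector_derivative_mult[OF e(5) e(4)] has_vector_derivative_mult[OF e(7) e(2)]]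
    by (simp add: y12_def y21_def algebra_simps)
  show "(y21 has_vector_derivative W2 t * y22 t - W1 t * y11 t) (at t)"
    unfolding y21_def[abs_def]
    using has_vector_derivative_diff[OF has_vector_derivative_mult[OF e(1) e(7)] has_vector_derivative_mult[OF e(3) e(5)]]
    by (simp add: y22_def y11_def algebra_simps)
  show "(y12 has_vector_derivative E2 t * y11 t - E1 t * y22 t) (at t)"
    unfolding y12_def[abs_def]
    using has_vector_derivative_diff[OF has_vector_derivative_mult[OF e(6) e(4)] has_vector_derivative_mult[OF e(8) e(2)]]
    by (simp add: y11_def y22_def algebra_simps)
  show "(y22 has_vector_derivative E2 t * y21 t - W1 t * y12 t) (at t)"
    unfolding y22_def[abs_def]
    using has_vector_derivative_diff[OF has_vector_derivative_mult[OF e(1) e(8)] has_vector_derivative_mult[OF e(3) e(6)]]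
    by (simp add: y21_def y12_def algebra_simps)
qed

lemma W_minus_cnj:
  "W1 t - cnj (W1 t) = 2 * \<i> * complex_of_real (w1 t)" "W2 t - cnj (W2 t) = 2 * \<i> * complex_of_real (w2 t)"
  by (simp_all add: W1_def W2_def complex_eq_iff)

lemma w_nonzero: "t \<in> I \<Longrightarrow> w1 t \<noteq> 0" "t \<in> I \<Longrightarrow> w2 t \<noteq> 0"
  using c1 c2 unfolding canonical_frame_data_def by auto

lemma eps_sign: "\<epsilon>1 \<in> {1,-1}" "\<epsilon>2 \<in> {1,-1}"
  using c1 c2 unfolding canonical_frame_data_def by auto

lemma y12_zero: assumes t: "t \<in> I" shows "y12 t = 0"
proof -
  have "cnj (E2 t * y21 t - W1 t * y12 t) = E2 t * y21 t - W1 t * y12 t"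
    by (rule has_vector_derivative_cnj_fixed[OF open_I t transition_real(4) has_vector_derivative_transition(4)[OF t]])
  then have "(W1 t - cnj (W1 t)) * y12 t = 0"
    using transition_real[OF t] by (simp add: E2_def algebra_simps)
  then show ?thesis unfolding W_minus_cnj using w_nonzero[OF t] by simp
qed

lemma w_y22_eq_w_y11: assumes t: "t \<in> I" shows "w2 t * Re (y22 t) = w1 t * Re (y11 t)"
proof -
  have "cnj (W2 t * y22 t - W1 t * y11 t) = W2 t * y22 t - W1 t * y11 t"
    by (rule has_vector_derivative_cnj_fixed[OF open_I t transition_real(2) has_vector_derivative_transition(2)[OF t]])
  then have "(W2 t - cnj (W2 t)) * y22 t - (W1 t - cnj (W1 t)) * y11 t = 0"
    using transition_real[OF t] by (simp add: algebra_simps)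
  then have "2 * \<i> * (complex_of_real (w2 t) * y22 t - complex_of_real (w1 t) * y11 t) = 0"
    unfolding W_minus_cnj by (simp add: algebra_simps)
  then have "complex_of_real (w2 t) * y22 t = complex_of_real (w1 t) * y11 t" by simp
  from arg_cong[OF this, of Re] show ?thesis by simp
qed

lemma eps_w_y_relation: assumes t: "t \<in> I" shows "w2 t * \<epsilon>2 * Re (y11 t) = w1 t * \<epsilon>1 * Re (y22 t)"
proof -
  have "E2 t * y11 t - E1 t * y22 t = 0"
    by (rule has_vector_derivative_const_on[OF open_I t y12_zero has_vector_derivative_transition(3)[OF t]])
  then have "E2 t * y11 t = E1 t * y22 t" by simp
  then have "Re (E2 t * y11 t) = Re (E1 t * y22 t)" by simp
  then show ?thesis by (simp add: E1_def E2_def)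
qed

lemma transition_of_real:
  "t \<in> I \<Longrightarrow> y11 t = complex_of_real (Re (y11 t))" "t \<in> I \<Longrightarrow> y22 t = complex_of_real (Re (y22 t))"
  using transition_real cnj_eq_imp_of_real_Re by blast+

lemma y11_y22_eq_1: assumes t: "t \<in> I" shows "Re (y11 t) * Re (y22 t) = 1"
proof -
  have "y11 t * y22 t = 1" using det_transition[OF t] y12_zero[OF t] by simp
  then have "complex_of_real (Re (y11 t) * Re (y22 t)) = 1"
    using transition_of_real[OF t] by (metis of_real_mult)
  then show ?thesis by (simp only: of_real_eq_1_iff)
qed

lemma transition_diagonal: assumes t: "t \<in> I" shows "y22 t = y11 t" "y11 t * y11 t = 1"
proof -
  have "Re (y11 t) = Re (y22 t) \<and> Re (y11 t) * Re (y11 t) = 1"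
    by (rule transition_scale_unit[OF eps_sign(1) eps_sign(2) w_nonzero(1)[OF t] w_nonzero(2)[OF t]])
       (use w_y22_eq_w_y11[OF t] eps_w_y_relation[OF t] y11_y22_eq_1[OF t] in \<open>simp_all add: algebra_simps\<close>)
  then show "y22 t = y11 t" "y11 t * y11 t = 1" using transition_of_real[OF t]
    by (metis of_real_eq_1_iff of_real_mult)+
qed

lemma y21_zero: assumes t: "t \<in> I" shows "y21 t = 0"
proof -
  have "y11 t * (W2 t * y12 t - E1 t * y21 t) + (W2 t * y12 t - E1 t * y21 t) * y11 t = 0"
    by (rule has_vector_derivative_const_on[OF open_I t transition_diagonal(2)
          has_vector_derivative_mult[OF has_vector_derivative_transition(1)[OF t]
            has_vector_derivative_transition(1)[OF t]]])
  then have "2 * y11 t * (E1 t * y21 t) = 0" using y12_zero[OF t] by (simp add: algebra_simps)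
  moreover have "y11 t \<noteq> 0" using transition_diagonal(2)[OF t] by auto
  moreover have "E1 t \<noteq> 0" using w_nonzero(1)[OF t] eps_sign(1) by (auto simp: E1_def)
  ultimately show ?thesis by simp
qed

lemma H_eq_scaled_G:
  assumes t: "t \<in> I"
  shows "H t = mat2 (y11 t * a t) (y11 t * b t) (y11 t * c t) (y11 t * d t)"
  unfolding H_eq_mat2[of t]
  using H_eq_G_transition[OF t] y12_zero[OF t] y21_zero[OF t] transition_diagonal(1)[OF t] by simp

lemma sign_ambiguity: "(\<forall>t\<in>I. H t = G t) \<or> (\<forall>t\<in>I. H t = - G t)"
proof -
  have "\<And>t. t \<in> I \<Longrightarrow> (y11 has_vector_derivative 0) (at t within I)"
    using has_vector_derivative_transition(1) y12_zero y21_zero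
    by (metis has_vector_derivative_at_within mult_zero_right diff_zero)
  then obtain c0 where c0: "\<And>t. t \<in> I \<Longrightarrow> y11 t = c0"
    using has_vector_derivative_zero_constant[OF convex_I] by metis
  show ?thesis
  proof (cases "I = {}")
    case True then show ?thesis by simp
  next
    case False
    then obtain t0 where t0: "t0 \<in> I" by blast
    have "c0 * c0 = 1" using transition_diagonal(2)[OF t0] c0[OF t0] by simp
    then have "c0 = 1 \<or> c0 = -1" by (metis square_eq_1_iff power2_eq_square)
    then show ?thesis
    proof
      assume "c0 = 1" then show ?thesis using H_eq_scaled_G c0 G_eq_mat2 by simp
    next
      assume "c0 = -1"
      then have "H t = - G t" if "t \<in> I" for t
        using H_eq_scaled_G[OF that] c0[OF that] G_eq_mat2[of t] by (simp add: cmat2_eq_iff)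
      then show ?thesis by blast
    qed
  qed
qed

end


theorem proposition2p1:
  fixes I :: "real set" and \<gamma> :: "real \<Rightarrow> complex^2^2"
  assumes "open_interval I"
    and "null_curve_no_flex I \<gamma>"
  shows "(\<exists>\<Gamma> \<epsilon> w k. canonical_frame_data I \<gamma> \<Gamma> \<epsilon> w k)
     \<and> (\<forall>\<Gamma> \<Gamma>'. canonical_frame I \<gamma> \<Gamma> \<and> canonical_frame I \<gamma> \<Gamma>' \<longrightarrow>
           (\<forall>t\<in>I. \<Gamma>' t = \<Gamma> t) \<or> (\<forall>t\<in>I. \<Gamma>' t = - \<Gamma> t))"
proof (intro conjI allI impI)
  show "\<exists>\<Gamma> \<epsilon> w k. canonical_frame_data I \<gamma> \<Gamma> \<epsilon> w k"
    by (rule exists_canonical_frame[OF assms])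
next
  fix \<Gamma> \<Gamma>' assume "canonical_frame I \<gamma> \<Gamma> \<and> canonical_frame I \<gamma> \<Gamma>'"
  then obtain \<epsilon>1 w1 k1 \<epsilon>2 w2 k2 where "canonical_frame_data I \<gamma> \<Gamma> \<epsilon>1 w1 k1"
    and "canonical_frame_data I \<gamma> \<Gamma>' \<epsilon>2 w2 k2"
    unfolding canonical_frame_def by blast
  then interpret canonical_frame_pair I \<gamma> \<Gamma> \<Gamma>' \<epsilon>1 \<epsilon>2 w1 k1 w2 k2
    using assms(1) by unfold_locales
  show "(\<forall>t\<in>I. \<Gamma>' t = \<Gamma> t) \<or> (\<forall>t\<in>I. \<Gamma>' t = - \<Gamma> t)" by (rule sign_ambiguity)
qed

end
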